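(* Let $x_1(t)$ be a smooth real function and $z_1(t),z_2(t),z_3(t)$ smooth complex functions satisfying $$\dot x_1=-3\,\mathrm{Im}(z_1z_2z_3),\quad \dot z_1=z_1(|z_2|^2-|z_3|^2)+ix_1\overline{z_2z_3},$$ $$\dot z_2=z_2(|z_3|^2-|z_1|^2)+ix_1\overline{z_3z_1},\quad \dot z_3=z_3(|z_1|^2-|z_2|^2)+ix_1\overline{z_1z_2},$$ with $\mathrm{Re}(z_1z_2z_3)=0$ at $t=0$, and with initial point whose orbit under the action $(x_1,z_1,z_2,z_3)\mapsto(rx_1,re^{i\phi_1}z_1,re^{i\phi_2}z_2,re^{-i(\phi_1+\phi_2)}z_3)$ ($r>0$, $\phi_1,\phi_2\in\mathbb{R}$) of $\mathbb{R}^+\times\mathrm{U}(1)^2$ is $3$-dimensional. Then the solution exists for all $t\in\mathbb{R}$, $\mathrm{Re}(z_1z_2z_3)=0$ for all $t$, $x_1^2+|z_1|^2+|z_2|^2+|z_3|^2$ is constant (and may be taken to be $1$), and $$M=\big\{\big(rx_1(t),re^{i\phi_1}z_1(t),re^{i\phi_2}z_2(t),re^{-i(\phi_1+\phi_2)}z_3(t)\big):r>0,\ \phi_1,\phi_2,t\in\mathbb{R}\big\}$$ is a coassociative $4$-fold in $\mathbb{R}^7$.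
   Context: $\mathbb{R}^7\cong\mathbb{R}\oplus\mathbb{C}^3$ via $z_1=x_2+ix_3$, $z_2=x_4+ix_5$, $z_3=x_6+ix_7$. Coassociative $4$-folds are oriented $4$-dimensional submanifolds calibrated by $\ast\varphi_0=d\mathbf{x}_{4567}+d\mathbf{x}_{2367}+d\mathbf{x}_{2345}+d\mathbf{x}_{1357}-d\mathbf{x}_{1346}-d\mathbf{x}_{1256}-d\mathbf{x}_{1247}$ (equivalently, suitably oriented $4$-folds on which $\varphi_0=d\mathbf{x}_{123}+d\mathbf{x}_{145}+d\mathbf{x}_{167}+d\mathbf{x}_{246}-d\mathbf{x}_{257}-d\mathbf{x}_{347}-d\mathbf{x}_{356}$ vanishes), where $d\mathbf{x}_{ij\dots k}=dx_i\wedge dx_j\wedge\dots\wedge dx_k$. *)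

theory Defs
  imports "HOL-Analysis.Analysis"
begin

text \<open>R^7 = R + C^3, with x1 real and z1 = x2 + i x3, z2 = x4 + i x5, z3 = x6 + i x7.\<close>
type_synonym R7 = "real \<times> complex \<times> complex \<times> complex"

definition coord :: "R7 \<Rightarrow> nat \<Rightarrow> real" where
  "coord p i = (case p of (x1, z1, z2, z3) \<Rightarrow>
     (if i = 1 then x1 else if i = 2 then Re z1 else if i = 3 then Im z1
      else if i = 4 then Re z2 else if i = 5 then Im z2
      else if i = 6 then Re z3 else if i = 7 then Im z3 else 0))"

text \<open>dx_i wedge dx_j wedge dx_k evaluated on (u,v,w): the 3x3 determinant.\<close>
definition dx3 :: "nat \<Rightarrow> nat \<Rightarrow> nat \<Rightarrow> R7 \<Rightarrow> R7 \<Rightarrow> R7 \<Rightarrow> real" where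
  "dx3 i j k u v w =
     coord u i * (coord v j * coord w k - coord v k * coord w j)
   - coord u j * (coord v i * coord w k - coord v k * coord w i)
   + coord u k * (coord v i * coord w j - coord v j * coord w i)"

definition phi0 :: "R7 \<Rightarrow> R7 \<Rightarrow> R7 \<Rightarrow> real" where
  "phi0 u v w = dx3 1 2 3 u v w + dx3 1 4 5 u v w + dx3 1 6 7 u v w + dx3 2 4 6 u v w
     - dx3 2 5 7 u v w - dx3 3 4 7 u v w - dx3 3 5 6 u v w"

text \<open>C^k and C^infinity on a set (meant for open sets): iterated directional derivatives.\<close>
fun Ck_on :: "nat \<Rightarrow> ('a::real_normed_vector \<Rightarrow> 'b::real_normed_vector) \<Rightarrow> 'a set \<Rightarrow> bool" where
  "Ck_on 0 f U = continuous_on U f"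
| "Ck_on (Suc k) f U = (\<exists>Df. (\<forall>x\<in>U. (f has_derivative Df x) (at x)) \<and>
                                (\<forall>v. Ck_on k (\<lambda>x. Df x v) U))"

definition smooth_on :: "('a::real_normed_vector \<Rightarrow> 'b::real_normed_vector) \<Rightarrow> 'a set \<Rightarrow> bool" where
  "smooth_on f U \<longleftrightarrow> (\<forall>k. Ck_on k f U)"

text \<open>Coassociative 4-fold (possibly immersed): image of a smooth immersion of an open
  subset of R^4 whose tangent planes are all coassociative, i.e. phi0 vanishes on them.\<close>
definition coassociative_4fold :: "R7 set \<Rightarrow> bool" where
  "coassociative_4fold M \<longleftrightarrow>
     (\<exists>(U :: (real \<times> real \<times> real \<times> real) set) F.
        open U \<and> U \<noteq> {} \<and> smooth_on F U \<and> F ` U = M \<and>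
        (\<forall>u\<in>U. \<exists>D. (F has_derivative D) (at u) \<and> inj D \<and>
                 (\<forall>a b c. phi0 (D a) (D b) (D c) = 0)))"

definition act :: "real \<times> real \<times> real \<Rightarrow> R7 \<Rightarrow> R7" where
  "act g p = (case g of (r, f1, f2) \<Rightarrow> case p of (x1, z1, z2, z3) \<Rightarrow>
     (r * x1, of_real r * cis f1 * z1, of_real r * cis f2 * z2, of_real r * cis (-(f1 + f2)) * z3))"

definition orbit_dim3 :: "R7 \<Rightarrow> bool" where
  "orbit_dim3 p \<longleftrightarrow> (\<exists>D. ((\<lambda>g. act g p) has_derivative D) (at (1, 0, 0)) \<and> dim (range D) = 3)"

definition is_solution_on ::
  "real set \<Rightarrow> (real \<Rightarrow> real) \<Rightarrow> (real \<Rightarrow> complex) \<Rightarrow> (real \<Rightarrow> complex) \<Rightarrow> (real \<Rightarrow> complex) \<Rightarrow> bool" where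
  "is_solution_on I x z1 z2 z3 \<longleftrightarrow>
     smooth_on (\<lambda>t. (x t, z1 t, z2 t, z3 t)) I \<and>
     (\<forall>t\<in>I.
        (x has_real_derivative (- 3 * Im (z1 t * z2 t * z3 t))) (at t) \<and>
        (z1 has_vector_derivative
           (z1 t * of_real ((cmod (z2 t))\<^sup>2 - (cmod (z3 t))\<^sup>2) + \<i> * of_real (x t) * cnj (z2 t * z3 t))) (at t) \<and>
        (z2 has_vector_derivative
           (z2 t * of_real ((cmod (z3 t))\<^sup>2 - (cmod (z1 t))\<^sup>2) + \<i> * of_real (x t) * cnj (z3 t * z1 t))) (at t) \<and>
        (z3 has_vector_derivative
           (z3 t * of_real ((cmod (z1 t))\<^sup>2 - (cmod (z2 t))\<^sup>2) + \<i> * of_real (x t) * cnj (z1 t * z2 t))) (at t))"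

end

theory Submission
  imports Defs
begin

text \<open>
  The vector field \<open>F\<close> of the system is orthogonal to the position vector, so \<open>|(x, z)|\<close> is a
  first integral. After a radial truncation outside the invariant sphere \<open>F\<close> is globally
  Lipschitz, and Picard iteration forwards and backwards in time gives a solution on all of \<open>\<real>\<close>,
  unique by Gronwall's inequality. Along a solution \<open>d/dt (z1 z2 z3) = i x (|z1 z2|\<^sup>2 + |z2 z3|\<^sup>2 +
  |z3 z1|\<^sup>2)\<close> is imaginary, so \<open>Re (z1 z2 z3)\<close> is constant.

  At a point \<open>g\<cdot>p(t)\<close> of \<open>M\<close> the tangent space is the image under \<open>g\<close> of the span of \<open>p\<close>, the
  two generators of the \<open>U(1)\<^sup>2\<close>-action and \<open>F(p)\<close>. Since \<open>\<phi>\<^sub>0 = dx\<^sub>1 \<and> \<omega> + Re \<Omega>\<close> is invariant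
  under the action, it suffices that \<open>\<phi>\<^sub>0\<close> vanishes on these four vectors, which is a direct
  computation using \<open>Re (z1 z2 z3) = 0\<close>. They are linearly independent as long as two of the
  \<open>z\<^sub>i\<close> are nonzero; this holds initially because the orbit is 3-dimensional, and is preserved
  because points with two vanishing \<open>z\<^sub>i\<close> are equilibria.
\<close>

section \<open>Functions of class \<open>C\<^sup>k\<close>\<close>

lemma Ck_on_SucE:
  assumes "Ck_on (Suc k) f U"
  obtains Df where "\<And>x. x \<in> U \<Longrightarrow> (f has_derivative Df x) (at x)" "\<And>v. Ck_on k (\<lambda>x. Df x v) U"
  using assms by (simp only: Ck_on.simps(2)) blast

lemma Ck_on_SucI:
  assumes "\<And>x. x \<in> U \<Longrightarrow> (f has_derivative Df x) (at x)" "\<And>v. Ck_on k (\<lambda>x. Df x v) U"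
  shows "Ck_on (Suc k) f U"
  unfolding Ck_on.simps(2) using assms by blast

lemma Ck_on_Suc_imp: "Ck_on (Suc k) f U \<Longrightarrow> Ck_on k f U"
proof (induction k arbitrary: f)
  case 0
  then obtain Df where "\<And>x. x \<in> U \<Longrightarrow> (f has_derivative Df x) (at x)"
    by (rule Ck_on_SucE) blast
  then show ?case by (auto intro!: continuous_at_imp_continuous_on has_derivative_continuous)
next
  case (Suc k)
  obtain Df where "\<And>x. x \<in> U \<Longrightarrow> (f has_derivative Df x) (at x)" "\<And>v. Ck_on (Suc k) (\<lambda>x. Df x v) U"
    using Suc.prems by (rule Ck_on_SucE) blast
  then show ?case by (blast intro: Ck_on_SucI[where Df = Df] Suc.IH)
qed

lemma Ck_on_const: "Ck_on k (\<lambda>x. c) U"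
proof (induction k arbitrary: c)
  case (Suc k)
  show ?case by (rule Ck_on_SucI[where Df = "\<lambda>x v. 0"]) (simp, rule Suc.IH)
qed simp

lemma Ck_on_ident: "Ck_on k (\<lambda>x. x) U"
proof (induction k)
  case (Suc k)
  show ?case by (rule Ck_on_SucI[where Df = "\<lambda>x v. v"]) (rule has_derivative_ident, rule Ck_on_const)
qed (simp add: continuous_on_id)

lemma Ck_on_add: "Ck_on k f U \<Longrightarrow> Ck_on k g U \<Longrightarrow> Ck_on k (\<lambda>x. f x + g x) U"
proof (induction k arbitrary: f g)
  case (Suc k)
  obtain Df where f: "\<And>x. x \<in> U \<Longrightarrow> (f has_derivative Df x) (at x)" "\<And>v. Ck_on k (\<lambda>x. Df x v) U"
    using Suc.prems(1) by (rule Ck_on_SucE) blast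
  obtain Dg where g: "\<And>x. x \<in> U \<Longrightarrow> (g has_derivative Dg x) (at x)" "\<And>v. Ck_on k (\<lambda>x. Dg x v) U"
    using Suc.prems(2) by (rule Ck_on_SucE) blast
  show ?case
    by (rule Ck_on_SucI[where Df = "\<lambda>x v. Df x v + Dg x v"])
       (rule has_derivative_add[OF f(1) g(1)], assumption, assumption, rule Suc.IH[OF f(2) g(2)])
qed (auto intro: continuous_on_add)

lemma Ck_on_bounded_linear: "bounded_linear L \<Longrightarrow> Ck_on k f U \<Longrightarrow> Ck_on k (\<lambda>x. L (f x)) U"
proof (induction k arbitrary: f)
  case 0
  then show ?case by (auto intro: continuous_on_compose2[OF linear_continuous_on[OF 0(1)]])
next
  case (Suc k)
  obtain Df where f: "\<And>x. x \<in> U \<Longrightarrow> (f has_derivative Df x) (at x)" "\<And>v. Ck_on k (\<lambda>x. Df x v) U"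
    using Suc.prems(2) by (rule Ck_on_SucE) blast
  show ?case
    by (rule Ck_on_SucI[where Df = "\<lambda>x v. L (Df x v)"])
       (rule bounded_linear.has_derivative[OF Suc.prems(1) f(1)], assumption,
        rule Suc.IH[OF Suc.prems(1) f(2)])
qed

lemma Ck_on_diff: "Ck_on k f U \<Longrightarrow> Ck_on k g U \<Longrightarrow> Ck_on k (\<lambda>x. f x - g x) U"
  using Ck_on_add[of k f U "\<lambda>x. (-1) *\<^sub>R g x"]
    Ck_on_bounded_linear[OF bounded_linear_scaleR_right[of "-1"], of k g U]
  by simp

lemma Ck_on_mult:
  fixes f g :: "'a::real_normed_vector \<Rightarrow> 'b::real_normed_algebra"
  shows "Ck_on k f U \<Longrightarrow> Ck_on k g U \<Longrightarrow> Ck_on k (\<lambda>x. f x * g x) U"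
proof (induction k arbitrary: f g)
  case (Suc k)
  obtain Df where f: "\<And>x. x \<in> U \<Longrightarrow> (f has_derivative Df x) (at x)" "\<And>v. Ck_on k (\<lambda>x. Df x v) U"
    using Suc.prems(1) by (rule Ck_on_SucE) blast
  obtain Dg where g: "\<And>x. x \<in> U \<Longrightarrow> (g has_derivative Dg x) (at x)" "\<And>v. Ck_on k (\<lambda>x. Dg x v) U"
    using Suc.prems(2) by (rule Ck_on_SucE) blast
  have "Ck_on k f U" "Ck_on k g U" using Suc.prems Ck_on_Suc_imp by blast+
  then show ?case
    by (intro Ck_on_SucI[where Df = "\<lambda>x v. f x * Dg x v + Df x v * g x"]
        has_derivative_mult f g Ck_on_add Suc.IH)
qed (auto intro: continuous_on_mult)

lemma Ck_on_Pair: "Ck_on k f U \<Longrightarrow> Ck_on k g U \<Longrightarrow> Ck_on k (\<lambda>x. (f x, g x)) U"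
proof (induction k arbitrary: f g)
  case (Suc k)
  obtain Df where f: "\<And>x. x \<in> U \<Longrightarrow> (f has_derivative Df x) (at x)" "\<And>v. Ck_on k (\<lambda>x. Df x v) U"
    using Suc.prems(1) by (rule Ck_on_SucE) blast
  obtain Dg where g: "\<And>x. x \<in> U \<Longrightarrow> (g has_derivative Dg x) (at x)" "\<And>v. Ck_on k (\<lambda>x. Dg x v) U"
    using Suc.prems(2) by (rule Ck_on_SucE) blast
  show ?case
    by (intro Ck_on_SucI[where Df = "\<lambda>x v. (Df x v, Dg x v)"] has_derivative_Pair f g Suc.IH)
qed (auto intro: continuous_on_Pair)

lemma Ck_on_compose_linear:
  assumes "bounded_linear L" "\<And>y. y \<in> V \<Longrightarrow> L y \<in> S"
  shows "Ck_on k f S \<Longrightarrow> Ck_on k (\<lambda>y. f (L y)) V"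
proof (induction k arbitrary: f)
  case 0
  then show ?case using assms
    by (auto intro!: continuous_on_compose2[OF _ linear_continuous_on[OF assms(1)]])
next
  case (Suc k)
  obtain Df where f: "\<And>x. x \<in> S \<Longrightarrow> (f has_derivative Df x) (at x)" "\<And>v. Ck_on k (\<lambda>x. Df x v) S"
    using Suc.prems(1) by (rule Ck_on_SucE) blast
  show ?case
    by (rule Ck_on_SucI[where Df = "\<lambda>y v. Df (L y) (L v)"])
       (rule has_derivative_compose[OF bounded_linear_imp_has_derivative[OF assms(1)] f(1)],
        rule assms(2), assumption, rule Suc.IH[OF f(2)])
qed

lemma Ck_on_Suc_if_vector_derivative:
  fixes f :: "real \<Rightarrow> 'b::real_normed_vector"
  assumes "\<And>x. x \<in> U \<Longrightarrow> (f has_vector_derivative f' x) (at x)" "Ck_on k f' U"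
  shows "Ck_on (Suc k) f U"
  by (rule Ck_on_SucI[where Df = "\<lambda>x v. v *\<^sub>R f' x"])
     (use assms(1) in \<open>simp add: has_vector_derivative_def\<close>,
      rule Ck_on_bounded_linear[OF bounded_linear_scaleR_right assms(2)])

lemma Ck_on_cis: "Ck_on k cis U"
proof (induction k)
  case (Suc k)
  have "(cis has_vector_derivative \<i> * cis x) (at x)" for x
    unfolding has_vector_derivative_def using has_derivative_cis[OF has_derivative_ident] by simp
  then show ?case
    by (rule Ck_on_Suc_if_vector_derivative) (rule Ck_on_bounded_linear[OF bounded_linear_mult_right Suc.IH])
qed (auto intro!: continuous_intros)

section \<open>The vector field\<close>

definition ode_field :: "R7 \<Rightarrow> R7" where
  "ode_field p = (case p of (x, z1, z2, z3) \<Rightarrow>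
     (- 3 * Im (z1 * z2 * z3),
      z1 * of_real ((cmod z2)\<^sup>2 - (cmod z3)\<^sup>2) + \<i> * of_real x * cnj (z2 * z3),
      z2 * of_real ((cmod z3)\<^sup>2 - (cmod z1)\<^sup>2) + \<i> * of_real x * cnj (z3 * z1),
      z3 * of_real ((cmod z1)\<^sup>2 - (cmod z2)\<^sup>2) + \<i> * of_real x * cnj (z1 * z2)))"

lemma of_real_cmod_square_diff:
  "(of_real ((cmod a)\<^sup>2 - (cmod b)\<^sup>2) :: complex) = a * cnj a - b * cnj b"
  by (simp only: of_real_diff complex_norm_square)

lemma ode_field_fst_snd: "ode_field p =
     (- 3 * Im (fst (snd p) * fst (snd (snd p)) * snd (snd (snd p))),
      fst (snd p) * (fst (snd (snd p)) * cnj (fst (snd (snd p))) - snd (snd (snd p)) * cnj (snd (snd (snd p))))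
        + \<i> * of_real (fst p) * cnj (fst (snd (snd p)) * snd (snd (snd p))),
      fst (snd (snd p)) * (snd (snd (snd p)) * cnj (snd (snd (snd p))) - fst (snd p) * cnj (fst (snd p)))
        + \<i> * of_real (fst p) * cnj (snd (snd (snd p)) * fst (snd p)),
      snd (snd (snd p)) * (fst (snd p) * cnj (fst (snd p)) - fst (snd (snd p)) * cnj (fst (snd (snd p))))
        + \<i> * of_real (fst p) * cnj (fst (snd p) * fst (snd (snd p))))"
  by (cases p) (simp only: ode_field_def of_real_cmod_square_diff prod.case fst_conv snd_conv)

lemma Ck_on_ode_field: "Ck_on k U S \<Longrightarrow> Ck_on k (\<lambda>t. ode_field (U t)) S"
  unfolding ode_field_fst_snd
  by (intro Ck_on_Pair Ck_on_add Ck_on_diff Ck_on_mult Ck_on_const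
      Ck_on_bounded_linear[OF bounded_linear_fst] Ck_on_bounded_linear[OF bounded_linear_snd]
      Ck_on_bounded_linear[OF bounded_linear_Im] Ck_on_bounded_linear[OF bounded_linear_cnj]
      Ck_on_bounded_linear[OF bounded_linear_of_real]; assumption)

lemma smooth_on_if_ode_field_solution:
  assumes "\<And>t. t \<in> I \<Longrightarrow> (U has_vector_derivative ode_field (U t)) (at t)"
  shows "smooth_on U I"
  unfolding smooth_on_def
proof
  fix k show "Ck_on k U I"
  proof (induction k)
    case 0
    then show ?case using assms
      by (auto intro!: continuous_at_imp_continuous_on intro: has_vector_derivative_continuous)
  next
    case (Suc k)
    then show ?case by (intro Ck_on_Suc_if_vector_derivative[OF assms] Ck_on_ode_field)
  qed
qed

lemma has_vector_derivative_Pair_iff: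
  "((\<lambda>x. (f x, g x)) has_vector_derivative (f', g')) (at x within S) \<longleftrightarrow>
     (f has_vector_derivative f') (at x within S) \<and> (g has_vector_derivative g') (at x within S)"
proof
  assume "((\<lambda>x. (f x, g x)) has_vector_derivative (f', g')) (at x within S)"
  then have "((\<lambda>x. (f x, g x)) has_derivative (\<lambda>h. (h *\<^sub>R f', h *\<^sub>R g'))) (at x within S)"
    by (simp add: has_vector_derivative_def)
  from has_derivative_fst[OF this] has_derivative_snd[OF this]
  show "(f has_vector_derivative f') (at x within S) \<and> (g has_vector_derivative g') (at x within S)"
    by (simp add: has_vector_derivative_def)
qed (auto intro: has_vector_derivative_Pair)

lemma is_solution_on_iff:
  "is_solution_on I x z1 z2 z3 \<longleftrightarrow>
     (\<forall>t\<in>I. ((\<lambda>t. (x t, z1 t, z2 t, z3 t)) has_vector_derivative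
               ode_field (x t, z1 t, z2 t, z3 t)) (at t))"
  (is "_ \<longleftrightarrow> (\<forall>t\<in>I. (?U has_vector_derivative _) _)")
proof -
  have "((?U has_vector_derivative ode_field (?U t)) (at t)) \<longleftrightarrow>
      (x has_real_derivative (- 3 * Im (z1 t * z2 t * z3 t))) (at t) \<and>
      (z1 has_vector_derivative
         (z1 t * of_real ((cmod (z2 t))\<^sup>2 - (cmod (z3 t))\<^sup>2) + \<i> * of_real (x t) * cnj (z2 t * z3 t))) (at t) \<and>
      (z2 has_vector_derivative
         (z2 t * of_real ((cmod (z3 t))\<^sup>2 - (cmod (z1 t))\<^sup>2) + \<i> * of_real (x t) * cnj (z3 t * z1 t))) (at t) \<and>
      (z3 has_vector_derivative
         (z3 t * of_real ((cmod (z1 t))\<^sup>2 - (cmod (z2 t))\<^sup>2) + \<i> * of_real (x t) * cnj (z1 t * z2 t))) (at t)"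
    for t
    unfolding ode_field_def prod.case has_vector_derivative_Pair_iff
      has_real_derivative_iff_has_vector_derivative ..
  then show ?thesis
    unfolding is_solution_on_def using smooth_on_if_ode_field_solution[of I ?U] by auto
qed

lemma inner_ode_field: "inner p (ode_field p) = 0"
  unfolding ode_field_fst_snd by (simp add: inner_prod_def inner_complex_def algebra_simps)

definition two_nonzero :: "complex \<Rightarrow> complex \<Rightarrow> complex \<Rightarrow> bool" where
  "two_nonzero z1 z2 z3 \<longleftrightarrow> (z1 \<noteq> 0 \<and> z2 \<noteq> 0) \<or> (z1 \<noteq> 0 \<and> z3 \<noteq> 0) \<or> (z2 \<noteq> 0 \<and> z3 \<noteq> 0)"

lemma ode_field_eq_0: "\<not> two_nonzero z1 z2 z3 \<Longrightarrow> ode_field (x, z1, z2, z3) = 0"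
proof -
  assume "\<not> two_nonzero z1 z2 z3"
  then have "(z1 = 0 \<and> z2 = 0) \<or> (z1 = 0 \<and> z3 = 0) \<or> (z2 = 0 \<and> z3 = 0)"
    unfolding two_nonzero_def by blast
  then show ?thesis by (elim disjE conjE) (simp_all add: ode_field_def zero_prod_def)
qed

lemma norm_triple_product_diff_le:
  fixes a b c a' b' c' :: "'a::real_normed_algebra"
  assumes "norm a \<le> R" "norm b \<le> R" "norm c \<le> R" "norm a' \<le> R" "norm b' \<le> R" "norm c' \<le> R"
    "norm (a - a') \<le> D" "norm (b - b') \<le> D" "norm (c - c') \<le> D"
  shows "norm (a * b * c - a' * b' * c') \<le> 3 * R\<^sup>2 * D"
proof -
  have R: "0 \<le> R" and D: "0 \<le> D" using assms(1,7) norm_ge_zero order_trans by blast+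
  have "a * b * c - a' * b' * c' = (a - a') * b * c + a' * (b - b') * c + a' * b' * (c - c')"
    by (simp add: algebra_simps)
  also have "norm \<dots> \<le> norm ((a - a') * b * c) + norm (a' * (b - b') * c) + norm (a' * b' * (c - c'))"
    by (rule order_trans[OF norm_triangle_ineq add_right_mono[OF norm_triangle_ineq]])
  also have "\<dots> \<le> D * R * R + R * D * R + R * R * D"
    by (intro add_mono order_trans[OF norm_mult_ineq] order_trans[OF mult_right_mono[OF norm_mult_ineq]]
        mult_mono) (use assms R D in auto)
  finally show ?thesis by (simp add: power2_eq_square algebra_simps)
qed

lemma norm_Pair4_le: "norm (a, b, c, d) \<le> norm a + norm b + norm c + norm d"
  using norm_Pair_le[of a "(b, c, d)"] norm_Pair_le[of b "(c, d)"] norm_Pair_le[of c d] by linarith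

lemma norm_le_norm_Pair4:
  "norm a \<le> norm (a, b, c, d)" "norm b \<le> norm (a, b, c, d)"
  "norm c \<le> norm (a, b, c, d)" "norm d \<le> norm (a, b, c, d)"
  using norm_fst_le[of a "(b, c, d)"] norm_snd_le[of "(b, c, d)" a]
    norm_fst_le[of b "(c, d)"] norm_snd_le[of "(c, d)" b] norm_fst_le[of c d] norm_snd_le[of d c]
  by linarith+

lemma norm_ode_field_component_diff_le:
  fixes a b c a' b' c' :: complex and x x' :: real
  assumes "norm a \<le> R" "norm b \<le> R" "norm c \<le> R" "norm a' \<le> R" "norm b' \<le> R" "norm c' \<le> R"
    "norm (a - a') \<le> D" "norm (b - b') \<le> D" "norm (c - c') \<le> D" "\<bar>x\<bar> \<le> R" "\<bar>x'\<bar> \<le> R" "\<bar>x - x'\<bar> \<le> D"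
  shows "norm ((a * (b * cnj b - c * cnj c) + \<i> * of_real x * cnj (b * c)) -
               (a' * (b' * cnj b' - c' * cnj c') + \<i> * of_real x' * cnj (b' * c'))) \<le> 9 * R\<^sup>2 * D"
proof -
  have eq: "(a * (b * cnj b - c * cnj c) + \<i> * of_real x * cnj (b * c)) -
               (a' * (b' * cnj b' - c' * cnj c') + \<i> * of_real x' * cnj (b' * c')) =
      (a * b * cnj b - a' * b' * cnj b') - (a * c * cnj c - a' * c' * cnj c') +
      ((\<i> * of_real x) * cnj b * cnj c - (\<i> * of_real x') * cnj b' * cnj c')"
    by (simp add: algebra_simps)
  have 1: "norm (a * b * cnj b - a' * b' * cnj b') \<le> 3 * R\<^sup>2 * D"
   and 2: "norm (a * c * cnj c - a' * c' * cnj c') \<le> 3 * R\<^sup>2 * D"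
    by (rule norm_triple_product_diff_le;
        use assms in \<open>auto simp: complex_cnj_diff[symmetric] simp del: complex_cnj_diff\<close>)+
  have 3: "norm ((\<i> * of_real x) * cnj b * cnj c - (\<i> * of_real x') * cnj b' * cnj c') \<le> 3 * R\<^sup>2 * D"
    by (rule norm_triple_product_diff_le)
       (use assms in \<open>auto simp: complex_cnj_diff[symmetric] norm_mult right_diff_distrib[symmetric]
          of_real_diff[symmetric] simp del: complex_cnj_diff of_real_diff\<close>)
  have "norm ((a * b * cnj b - a' * b' * cnj b') - (a * c * cnj c - a' * c' * cnj c') +
      ((\<i> * of_real x) * cnj b * cnj c - (\<i> * of_real x') * cnj b' * cnj c')) \<le>
      norm (a * b * cnj b - a' * b' * cnj b') + norm (a * c * cnj c - a' * c' * cnj c') +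
      norm ((\<i> * of_real x) * cnj b * cnj c - (\<i> * of_real x') * cnj b' * cnj c')"
    by (rule order_trans[OF norm_triangle_ineq add_right_mono[OF norm_triangle_ineq4]])
  then show ?thesis unfolding eq using 1 2 3 by linarith
qed

lemma ode_field_lipschitz:
  assumes "norm p \<le> R" "norm q \<le> R"
  shows "norm (ode_field p - ode_field q) \<le> 36 * R\<^sup>2 * norm (p - q)"
proof -
  obtain x z1 z2 z3 where p: "p = (x, z1, z2, z3)" by (cases p) auto
  obtain y w1 w2 w3 where q: "q = (y, w1, w2, w3)" by (cases q) auto
  define D where "D = norm (p - q)"
  have n: "\<bar>x\<bar> \<le> R" "norm z1 \<le> R" "norm z2 \<le> R" "norm z3 \<le> R"
          "\<bar>y\<bar> \<le> R" "norm w1 \<le> R" "norm w2 \<le> R" "norm w3 \<le> R"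
    using assms norm_le_norm_Pair4[where a = x and b = z1 and c = z2 and d = z3]
      norm_le_norm_Pair4[where a = y and b = w1 and c = w2 and d = w3]
    unfolding p q by (auto simp del: norm_of_real)
  have d: "\<bar>x - y\<bar> \<le> D" "norm (z1 - w1) \<le> D" "norm (z2 - w2) \<le> D" "norm (z3 - w3) \<le> D"
    using norm_le_norm_Pair4[where a = "x - y" and b = "z1 - w1" and c = "z2 - w2" and d = "z3 - w3"] unfolding D_def p q by auto
  define d0 where "d0 = - 3 * Im (z1 * z2 * z3) - - 3 * Im (w1 * w2 * w3)"
  define d1 where "d1 = z1 * (z2 * cnj z2 - z3 * cnj z3) + \<i> * of_real x * cnj (z2 * z3) -
       (w1 * (w2 * cnj w2 - w3 * cnj w3) + \<i> * of_real y * cnj (w2 * w3))"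
  define d2 where "d2 = z2 * (z3 * cnj z3 - z1 * cnj z1) + \<i> * of_real x * cnj (z3 * z1) -
       (w2 * (w3 * cnj w3 - w1 * cnj w1) + \<i> * of_real y * cnj (w3 * w1))"
  define d3 where "d3 = z3 * (z1 * cnj z1 - z2 * cnj z2) + \<i> * of_real x * cnj (z1 * z2) -
       (w3 * (w1 * cnj w1 - w2 * cnj w2) + \<i> * of_real y * cnj (w1 * w2))"
  have "ode_field p - ode_field q = (d0, d1, d2, d3)"
    unfolding p q ode_field_def of_real_cmod_square_diff d0_def d1_def d2_def d3_def by simp
  moreover have "\<bar>Im (z1 * z2 * z3) - Im (w1 * w2 * w3)\<bar> \<le> 3 * R\<^sup>2 * D"
    using abs_Im_le_cmod[of "z1 * z2 * z3 - w1 * w2 * w3"]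
      norm_triple_product_diff_le[of z1 R z2 z3 w1 w2 w3 D] n d by simp
  then have "norm d0 \<le> 9 * R\<^sup>2 * D" unfolding d0_def by simp
  moreover have "norm d1 \<le> 9 * R\<^sup>2 * D" "norm d2 \<le> 9 * R\<^sup>2 * D" "norm d3 \<le> 9 * R\<^sup>2 * D"
    unfolding d1_def d2_def d3_def by (rule norm_ode_field_component_diff_le; use n d in auto)+
  ultimately have "norm (ode_field p - ode_field q) \<le> 4 * (9 * R\<^sup>2 * D)"
    using norm_Pair4_le[where a = d0 and b = d1 and c = d2 and d = d3] by simp
  then show ?thesis unfolding D_def by simp
qed

section \<open>Uniqueness of solutions\<close>

lemma norm_eq_if_inner_field_eq_0:
  fixes F :: "'a::real_inner \<Rightarrow> 'a"
  assumes "convex I" and orth: "\<And>p. inner p (F p) = 0"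
    and U: "\<And>t. t \<in> I \<Longrightarrow> (U has_vector_derivative F (U t)) (at t within I)"
    and "s \<in> I" "t \<in> I"
  shows "norm (U t) = norm (U s)"
proof -
  have "\<exists>c. \<forall>t\<in>I. inner (U t) (U t) = c"
  proof (rule has_derivative_zero_constant[OF \<open>convex I\<close>])
    fix t assume "t \<in> I"
    then have "(U has_derivative (\<lambda>h. h *\<^sub>R F (U t))) (at t within I)"
      using U unfolding has_vector_derivative_def by blast
    from has_derivative_inner[OF this this]
    show "((\<lambda>t. inner (U t) (U t)) has_derivative (\<lambda>h. 0)) (at t within I)"
      using orth[of "U t"] by (simp add: inner_commute)
  qed
  then show ?thesis using assms(4,5) by (metis norm_eq_sqrt_inner)
qed

lemma gronwall_zero:
  fixes e e' :: "real \<Rightarrow> real"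
  assumes I: "is_interval I" and t0: "t0 \<in> I"
    and d: "\<And>t. t \<in> I \<Longrightarrow> (e has_real_derivative e' t) (at t)"
    and b: "\<And>t. t \<in> I \<Longrightarrow> \<bar>e' t\<bar> \<le> C * e t"
    and nn: "\<And>t. t \<in> I \<Longrightarrow> 0 \<le> e t" and z: "e t0 = 0" and t: "t \<in> I"
  shows "e t = 0"
proof (cases "t0 \<le> t")
  case True
  have "e t * exp (- C * t) \<le> e t0 * exp (- C * t0)"
  proof (rule DERIV_nonpos_imp_nonincreasing[OF True])
    fix x assume "t0 \<le> x" "x \<le> t"
    then have x: "x \<in> I" using mem_is_interval_1_I[OF I t0 t] by blast
    have ex: "((\<lambda>s. exp (- C * s)) has_real_derivative exp (- C * x) * (- C)) (at x)"
      by (auto intro!: derivative_eq_intros)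
    have "e' x * exp (- C * x) + exp (- C * x) * (- C) * e x = (e' x - C * e x) * exp (- C * x)"
      by (simp add: algebra_simps)
    also have "\<dots> \<le> 0" using b[OF x] by (intro mult_nonpos_nonneg) auto
    finally show "\<exists>y. ((\<lambda>s. e s * exp (- C * s)) has_real_derivative y) (at x) \<and> y \<le> 0"
      using DERIV_mult[OF d[OF x] ex] by blast
  qed
  then show ?thesis using nn[OF t] z by (simp add: mult_le_0_iff)
next
  case False
  then have "t \<le> t0" by simp
  have "e t * exp (C * t) \<le> e t0 * exp (C * t0)"
  proof (rule DERIV_nonneg_imp_nondecreasing[OF \<open>t \<le> t0\<close>])
    fix x assume "t \<le> x" "x \<le> t0"
    then have x: "x \<in> I" using mem_is_interval_1_I[OF I t t0] by blast
    have ex: "((\<lambda>s. exp (C * s)) has_real_derivative exp (C * x) * C) (at x)"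
      by (auto intro!: derivative_eq_intros)
    have "e' x * exp (C * x) + exp (C * x) * C * e x = (e' x + C * e x) * exp (C * x)"
      by (simp add: algebra_simps)
    moreover have "0 \<le> (e' x + C * e x) * exp (C * x)" using b[OF x] by (intro mult_nonneg_nonneg) auto
    ultimately show "\<exists>y. ((\<lambda>s. e s * exp (C * s)) has_real_derivative y) (at x) \<and> 0 \<le> y"
      using DERIV_mult[OF d[OF x] ex] by auto
  qed
  then show ?thesis using nn[OF t] z by (simp add: mult_le_0_iff)
qed

lemma ode_solutions_eq_if_lipschitz:
  fixes F :: "'a::real_inner \<Rightarrow> 'a"
  assumes I: "is_interval I" "t0 \<in> I" "t \<in> I"
    and lip: "\<And>p q. norm p \<le> R \<Longrightarrow> norm q \<le> R \<Longrightarrow> norm (F p - F q) \<le> L * norm (p - q)"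
    and U: "\<And>s. s \<in> I \<Longrightarrow> (U has_vector_derivative F (U s)) (at s)" "\<And>s. s \<in> I \<Longrightarrow> norm (U s) \<le> R"
    and W: "\<And>s. s \<in> I \<Longrightarrow> (W has_vector_derivative F (W s)) (at s)" "\<And>s. s \<in> I \<Longrightarrow> norm (W s) \<le> R"
    and "U t0 = W t0"
  shows "U t = W t"
proof -
  define e where "e s = inner (U s - W s) (U s - W s)" for s
  define e' where "e' s = 2 * inner (U s - W s) (F (U s) - F (W s))" for s
  have "e t = 0"
  proof (rule gronwall_zero[OF I(1,2), where e = e and e' = e' and C = "2 * L"])
    fix s assume s: "s \<in> I"
    have "((\<lambda>s. U s - W s) has_derivative (\<lambda>h. h *\<^sub>R (F (U s) - F (W s)))) (at s)"
      using has_vector_derivative_diff[OF U(1)[OF s] W(1)[OF s]]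
      by (simp add: has_vector_derivative_def)
    from has_derivative_inner[OF this this]
    show "(e has_real_derivative e' s) (at s)"
      unfolding e_def e'_def has_field_derivative_def
      by (rule has_derivative_eq_rhs) (auto simp: inner_commute algebra_simps)
    have "\<bar>e' s\<bar> \<le> 2 * (norm (U s - W s) * norm (F (U s) - F (W s)))"
      unfolding e'_def using Cauchy_Schwarz_ineq2 by (simp add: abs_mult)
    also have "\<dots> \<le> 2 * (norm (U s - W s) * (L * norm (U s - W s)))"
      using lip[OF U(2)[OF s] W(2)[OF s]] by (intro mult_left_mono) auto
    also have "\<dots> = 2 * L * e s"
      unfolding e_def by (simp add: power2_norm_eq_inner[symmetric] power2_eq_square)
    finally show "\<bar>e' s\<bar> \<le> 2 * L * e s" .
  qed (use I \<open>U t0 = W t0\<close> in \<open>simp_all add: e_def\<close>)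
  then show ?thesis unfolding e_def by simp
qed

lemma ode_field_solution_norm_eq:
  assumes "is_interval I" "\<And>t. t \<in> I \<Longrightarrow> (U has_vector_derivative ode_field (U t)) (at t)"
    and "s \<in> I" "t \<in> I"
  shows "norm (U t) = norm (U s)"
  using assms
  by (intro norm_eq_if_inner_field_eq_0[where F = ode_field and I = I])
     (auto simp: is_interval_convex inner_ode_field intro: has_vector_derivative_at_within)

lemma ode_field_solutions_eq:
  assumes I: "is_interval I" "t0 \<in> I" "t \<in> I"
    and U: "\<And>s. s \<in> I \<Longrightarrow> (U has_vector_derivative ode_field (U s)) (at s)"
    and W: "\<And>s. s \<in> I \<Longrightarrow> (W has_vector_derivative ode_field (W s)) (at s)"
    and "U t0 = W t0"
  shows "U t = W t"
proof (rule ode_solutions_eq_if_lipschitz[OF I ode_field_lipschitz U(1) _ W(1)])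
  fix s assume "s \<in> I"
  show "norm (U s) \<le> norm (U t0)" "norm (W s) \<le> norm (U t0)"
    using ode_field_solution_norm_eq[OF I(1) U \<open>t0 \<in> I\<close> \<open>s \<in> I\<close>]
      ode_field_solution_norm_eq[OF I(1) W \<open>t0 \<in> I\<close> \<open>s \<in> I\<close>] \<open>U t0 = W t0\<close>
    by simp_all
qed (use \<open>U t0 = W t0\<close> in auto)

section \<open>Global existence of solutions\<close>

text \<open>Picard's map for \<open>u' = F u\<close>, \<open>u 0 = u0\<close> on \<open>[0, \<infinity>)\<close>, written for the rescaled unknown
  \<open>g t = exp (-2 L t) u t\<close>. For \<open>F\<close> with Lipschitz constant \<open>L\<close> the weight makes it a contraction
  with constant \<open>1/2\<close> in the sup norm (Bielecki's trick).\<close>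

definition weighted_picard :: "('a::banach \<Rightarrow> 'a) \<Rightarrow> real \<Rightarrow> 'a \<Rightarrow> (real \<Rightarrow> 'a) \<Rightarrow> real \<Rightarrow> 'a" where
  "weighted_picard F L u0 g t =
     exp (- 2 * L * max 0 t) *\<^sub>R (u0 + integral {0..max 0 t} (\<lambda>s. F (exp (2 * L * s) *\<^sub>R g s)))"

lemma has_integral_exp_weight:
  fixes L d x :: real
  assumes "0 \<le> x"
  shows "((\<lambda>s. L * exp (2 * L * s) * d) has_integral (d * (exp (2 * L * x) - 1) / 2)) {0..x}"
proof -
  have "((\<lambda>s. L * exp (2 * L * s) * d) has_integral
      ((\<lambda>s. d * exp (2 * L * s) / 2) x - (\<lambda>s. d * exp (2 * L * s) / 2) 0)) {0..x}"
    by (rule fundamental_theorem_of_calculus[OF assms])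
       (auto intro!: derivative_eq_intros simp: has_real_derivative_iff_has_vector_derivative[symmetric]
         algebra_simps)
  then show ?thesis by (simp add: field_simps)
qed

lemma mult_exp_neg_le:
  fixes a c :: real
  assumes "0 < a"
  shows "c * exp (- a * c) \<le> 1 / a"
proof -
  have "a * c \<le> exp (a * c)" using exp_ge_add_one_self[of "a * c"] by linarith
  then have "a * c * exp (- a * c) \<le> exp (a * c) * exp (- a * c)" by (intro mult_right_mono) auto
  also have "\<dots> = 1" by (simp add: exp_add[symmetric])
  finally show ?thesis using assms by (simp add: field_simps)
qed

lemma continuous_on_picard_integrand:
  fixes g :: "real \<Rightarrow> 'a::real_normed_vector"
  assumes "continuous_on UNIV F" "continuous_on UNIV g"
  shows "continuous_on UNIV (\<lambda>s. F (exp (2 * L * s) *\<^sub>R g s))"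
proof -
  have "continuous_on UNIV (\<lambda>s. exp (2 * L * s) *\<^sub>R g s)"
    using assms(2) by (intro continuous_intros) auto
  then show ?thesis by (rule continuous_on_compose2[OF assms(1)]) auto
qed

lemma weighted_picard_dist_le:
  assumes L: "0 < L" and lip: "\<And>x y. norm (F x - F y) \<le> L * norm (x - y)"
    and g: "continuous_on UNIV g1" "continuous_on UNIV g2" and d: "\<And>s. norm (g1 s - g2 s) \<le> d"
  shows "norm (weighted_picard F L u0 g1 t - weighted_picard F L u0 g2 t) \<le> d / 2"
proof -
  define c where "c = max 0 t"
  define h where "h g s = F (exp (2 * L * s) *\<^sub>R g s)" for g s
  have c: "0 \<le> c" unfolding c_def by simp
  have "0 \<le> d" using d[of 0] norm_ge_zero order_trans by blast
  have "continuous_on UNIV F"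
    using lip L by (intro lipschitz_on_continuous_on[of L]) (auto simp: lipschitz_on_def dist_norm)
  then have int: "h g integrable_on {0..c}" if "continuous_on UNIV g" for g
    unfolding h_def
    by (intro integrable_continuous_real continuous_on_subset[OF continuous_on_picard_integrand] that)
       auto
  have "norm (integral {0..c} (h g1) - integral {0..c} (h g2)) = norm (integral {0..c} (\<lambda>s. h g1 s - h g2 s))"
    using int[OF g(1)] int[OF g(2)] by (simp add: integral_diff)
  also have "\<dots> \<le> integral {0..c} (\<lambda>s. L * exp (2 * L * s) * d)"
  proof (rule integral_norm_bound_integral)
    show "(\<lambda>s. h g1 s - h g2 s) integrable_on {0..c}" using int[OF g(1)] int[OF g(2)] by (rule integrable_diff)
    show "(\<lambda>s. L * exp (2 * L * s) * d) integrable_on {0..c}" using has_integral_exp_weight[OF c] by blast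
    fix s
    have "norm (h g1 s - h g2 s) \<le> L * norm (exp (2 * L * s) *\<^sub>R (g1 s - g2 s))"
      unfolding h_def scaleR_diff_right by (rule lip)
    also have "\<dots> \<le> L * exp (2 * L * s) * d" using d[of s] L by (simp add: mult_left_mono)
    finally show "norm (h g1 s - h g2 s) \<le> L * exp (2 * L * s) * d" .
  qed
  also have "\<dots> = d * (exp (2 * L * c) - 1) / 2" using has_integral_exp_weight[OF c] by (rule integral_unique)
  finally have "exp (- 2 * L * c) * norm (integral {0..c} (h g1) - integral {0..c} (h g2))
      \<le> exp (- 2 * L * c) * (d * (exp (2 * L * c) - 1) / 2)"
    by (intro mult_left_mono) auto
  also have "\<dots> = d / 2 - d / 2 * exp (- 2 * L * c)"
    by (simp add: algebra_simps diff_divide_distrib exp_add[symmetric])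
  also have "\<dots> \<le> d / 2" using \<open>0 \<le> d\<close> by simp
  finally show ?thesis
    unfolding weighted_picard_def h_def c_def[symmetric] scaleR_diff_right[symmetric] by simp
qed

lemma continuous_on_weighted_picard:
  assumes "continuous_on UNIV F" "continuous_on UNIV g"
  shows "continuous_on UNIV (weighted_picard F L u0 g)"
proof -
  have "isCont (weighted_picard F L u0 g) t" for t
  proof -
    define T where "T = \<bar>t\<bar> + 1"
    have "continuous_on {0..T} (\<lambda>x. integral {0..x} (\<lambda>s. F (exp (2 * L * s) *\<^sub>R g s)))"
      by (intro indefinite_integral_continuous_1 integrable_continuous_real
          continuous_on_subset[OF continuous_on_picard_integrand[OF assms]]) auto
    then have "continuous_on {..<T} (\<lambda>t. integral {0..max 0 t} (\<lambda>s. F (exp (2 * L * s) *\<^sub>R g s)))"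
      by (rule continuous_on_compose2) (auto intro!: continuous_intros simp: T_def)
    then have "continuous_on {..<T} (weighted_picard F L u0 g)"
      unfolding weighted_picard_def by (intro continuous_intros)
    moreover have "t \<in> {..<T}" unfolding T_def by auto
    ultimately show ?thesis using continuous_on_eq_continuous_at[of "{..<T}"] by auto
  qed
  then show ?thesis by (intro continuous_at_imp_continuous_on) auto
qed

lemma bounded_weighted_picard:
  assumes L: "0 < L" and lip: "\<And>x y. norm (F x - F y) \<le> L * norm (x - y)"
  shows "bounded (range (weighted_picard F L u0 (apply_bcontfun g)))"
proof -
  obtain B where B: "\<And>s. norm (apply_bcontfun g s) \<le> B"
    using bounded_apply_bcontfun[of g] unfolding bounded_iff by auto
  have "norm (weighted_picard F L u0 (apply_bcontfun g) t) \<le> B / 2 + (norm u0 + norm (F 0) / (2 * L))" for t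
  proof -
    define c where "c = max 0 t"
    have c: "0 \<le> c" unfolding c_def by simp
    have "weighted_picard F L u0 (\<lambda>_. 0) t = exp (- 2 * L * c) *\<^sub>R (u0 + c *\<^sub>R F 0)"
      unfolding weighted_picard_def c_def by simp
    then have "norm (weighted_picard F L u0 (\<lambda>_. 0) t) \<le> exp (- 2 * L * c) * (norm u0 + c * norm (F 0))"
      using c norm_triangle_ineq[of u0 "c *\<^sub>R F 0"] by (simp add: mult_left_mono)
    also have "\<dots> = exp (- 2 * L * c) * norm u0 + c * exp (- 2 * L * c) * norm (F 0)"
      by (simp add: algebra_simps)
    also have "\<dots> \<le> norm u0 + norm (F 0) / (2 * L)"
    proof (rule add_mono)
      show "exp (- 2 * L * c) * norm u0 \<le> norm u0" using L c by (simp add: mult_left_le_one_le)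
      have "c * exp (- 2 * L * c) * norm (F 0) \<le> 1 / (2 * L) * norm (F 0)"
        using mult_exp_neg_le[of "2 * L" c] L by (intro mult_right_mono) auto
      then show "c * exp (- 2 * L * c) * norm (F 0) \<le> norm (F 0) / (2 * L)" by simp
    qed
    finally have "norm (weighted_picard F L u0 (\<lambda>_. 0) t) \<le> norm u0 + norm (F 0) / (2 * L)" .
    moreover have "norm (weighted_picard F L u0 (apply_bcontfun g) t - weighted_picard F L u0 (\<lambda>_. 0) t) \<le> B / 2"
      by (rule weighted_picard_dist_le[OF L lip]) (use B in auto)
    ultimately show ?thesis using norm_triangle_ineq2[of "weighted_picard F L u0 (apply_bcontfun g) t" "weighted_picard F L u0 (\<lambda>_. 0) t"]
      by linarith
  qed
  then show ?thesis unfolding bounded_iff by blast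
qed

theorem ode_forward_solution_if_lipschitz:
  fixes F :: "'a::banach \<Rightarrow> 'a"
  assumes L: "0 < L" and lip: "\<And>x y. norm (F x - F y) \<le> L * norm (x - y)"
  obtains f where "f 0 = u0"
    "\<And>T t. 0 \<le> t \<Longrightarrow> t \<le> T \<Longrightarrow> (f has_vector_derivative F (f t)) (at t within {0..T})"
proof -
  have contF: "continuous_on UNIV F"
    using lip L by (intro lipschitz_on_continuous_on[of L]) (auto simp: lipschitz_on_def dist_norm)
  define \<Phi> where "\<Phi> g = Bcontfun (weighted_picard F L u0 (apply_bcontfun g))" for g :: "real \<Rightarrow>\<^sub>C 'a"
  have "weighted_picard F L u0 (apply_bcontfun g) \<in> bcontfun" for g
    using continuous_on_weighted_picard[OF contF] bounded_weighted_picard[OF L lip]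
    unfolding bcontfun_def by blast
  then have \<Phi>: "apply_bcontfun (\<Phi> g) = weighted_picard F L u0 (apply_bcontfun g)" for g
    unfolding \<Phi>_def by (simp add: Bcontfun_inverse)
  have "dist (\<Phi> g1) (\<Phi> g2) \<le> 1 / 2 * dist g1 g2" for g1 g2
  proof (rule dist_bound)
    fix t
    have "norm (weighted_picard F L u0 g1 t - weighted_picard F L u0 g2 t) \<le> dist g1 g2 / 2"
      by (rule weighted_picard_dist_le[OF L lip]) (use dist_bounded[of g1 _ g2] in \<open>auto simp: dist_norm\<close>)
    then show "dist (\<Phi> g1 t) (\<Phi> g2 t) \<le> 1 / 2 * dist g1 g2" by (simp add: \<Phi> dist_norm)
  qed
  then obtain g where "\<Phi> g = g" using banach_fix_type[of "1/2" \<Phi>] by auto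
  then have fixed: "weighted_picard F L u0 g t = g t" for t by (metis \<Phi>)
  define h where "h s = F (exp (2 * L * s) *\<^sub>R g s)" for s
  define f where "f t = u0 + integral {0..t} h" for t
  have f: "exp (2 * L * t) *\<^sub>R g t = f t" if "0 \<le> t" for t
  proof -
    have "g t = exp (- 2 * L * t) *\<^sub>R f t"
      using fixed[of t] that unfolding weighted_picard_def f_def h_def by simp
    then have "exp (2 * L * t) *\<^sub>R g t = (exp (2 * L * t) * exp (- 2 * L * t)) *\<^sub>R f t" by simp
    also have "exp (2 * L * t) * exp (- 2 * L * t) = 1" by (simp add: exp_add[symmetric])
    finally show ?thesis by simp
  qed
  show ?thesis
  proof
    show "f 0 = u0" by (simp add: f_def)
    fix T t :: real assume t: "0 \<le> t" "t \<le> T"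
    have "((\<lambda>u. integral {0..u} h) has_vector_derivative h t) (at t within {0..T})"
      unfolding h_def
      by (rule integral_has_vector_derivative)
         (use continuous_on_picard_integrand[OF contF, of g] t in \<open>auto intro: continuous_on_subset\<close>)
    then have "(f has_vector_derivative h t) (at t within {0..T})"
      unfolding f_def by (intro derivative_eq_intros) auto
    then show "(f has_vector_derivative F (f t)) (at t within {0..T})" using f[OF t(1)] by (simp add: h_def)
  qed
qed

definition radial_retraction :: "real \<Rightarrow> 'a::real_normed_vector \<Rightarrow> 'a" where
  "radial_retraction R p = (if norm p \<le> R then p else (R / norm p) *\<^sub>R p)"

lemma norm_radial_retraction_le: "0 < R \<Longrightarrow> norm (radial_retraction R p) \<le> R"
  by (auto simp: radial_retraction_def)

lemma radial_retraction_eq_self: "norm p \<le> R \<Longrightarrow> radial_retraction R p = p"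
  by (simp add: radial_retraction_def)

lemma norm_radial_retraction_diff_outside:
  assumes "0 < R" "R < norm p"
  shows "norm (radial_retraction R p - p) = norm p - R"
proof -
  have "0 < norm p" using assms by linarith
  then have "p \<noteq> 0" by simp
  have "radial_retraction R p - p = (R / norm p - 1) *\<^sub>R p"
    using assms \<open>p \<noteq> 0\<close> by (simp add: radial_retraction_def algebra_simps)
  then have "norm (radial_retraction R p - p) = \<bar>R / norm p - 1\<bar> * norm p" by simp
  also have "\<dots> = (1 - R / norm p) * norm p"
    using assms \<open>p \<noteq> 0\<close> by (simp add: divide_less_eq_1)
  also have "\<dots> = norm p - R" using \<open>p \<noteq> 0\<close> by (simp add: field_simps)
  finally show ?thesis .
qed

lemma radial_retraction_lipschitz_outside_inside:
  assumes "0 < R" "R < norm p" "norm q \<le> R"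
  shows "norm (radial_retraction R p - radial_retraction R q) \<le> 2 * norm (p - q)"
proof -
  have "norm (radial_retraction R p - radial_retraction R q) = norm ((radial_retraction R p - p) + (p - q))"
    using assms(3) by (simp add: radial_retraction_eq_self)
  also have "\<dots> \<le> norm (radial_retraction R p - p) + norm (p - q)" by (rule norm_triangle_ineq)
  also have "norm (radial_retraction R p - p) = norm p - R" by (rule norm_radial_retraction_diff_outside[OF assms(1,2)])
  also have "norm p - R \<le> norm (p - q)" using assms(3) norm_triangle_ineq2[of p q] by linarith
  finally show ?thesis by simp
qed

lemma radial_retraction_lipschitz_outside:
  assumes R: "0 < R" and p: "R < norm p" and q: "R < norm q"
  shows "norm (radial_retraction R p - radial_retraction R q) \<le> 2 * norm (p - q)"
proof -
  have "0 < norm p" "0 < norm q" using p q R by linarith+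
  then have "p \<noteq> 0" "q \<noteq> 0" by simp_all
  define a where "a = R / norm p"
  define b where "b = R / norm q"
  have a: "0 \<le> a" "a \<le> 1" using p R by (auto simp: a_def divide_le_eq_1)
  have "radial_retraction R p - radial_retraction R q = a *\<^sub>R (p - q) + (a - b) *\<^sub>R q"
    using p q \<open>p \<noteq> 0\<close> \<open>q \<noteq> 0\<close>
    by (simp add: radial_retraction_def a_def b_def algebra_simps not_le[symmetric])
  moreover have "norm (a *\<^sub>R (p - q)) \<le> norm (p - q)" using a by (simp add: mult_left_le_one_le)
  moreover have "norm ((a - b) *\<^sub>R q) \<le> norm (p - q)"
  proof -
    have "(a - b) * norm q = a * (norm q - norm p)"
      using \<open>p \<noteq> 0\<close> \<open>q \<noteq> 0\<close> by (simp add: a_def b_def field_simps)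
    moreover have "norm ((a - b) *\<^sub>R q) = \<bar>(a - b) * norm q\<bar>" by (simp add: abs_mult)
    ultimately have "norm ((a - b) *\<^sub>R q) = \<bar>a * (norm q - norm p)\<bar>" by simp
    also have "\<dots> = a * \<bar>norm q - norm p\<bar>" using a by (simp add: abs_mult)
    also have "\<dots> \<le> 1 * norm (p - q)"
      using a norm_triangle_ineq3[of q p] by (intro mult_mono) (auto simp: norm_minus_commute)
    finally show ?thesis by simp
  qed
  ultimately show ?thesis using norm_triangle_ineq[of "a *\<^sub>R (p - q)" "(a - b) *\<^sub>R q"] by simp
qed

lemma radial_retraction_lipschitz:
  assumes "0 < R"
  shows "norm (radial_retraction R p - radial_retraction R q) \<le> 2 * norm (p - q)"
proof -
  consider "norm p \<le> R" "norm q \<le> R" | "R < norm p" "norm q \<le> R" | "norm p \<le> R" "R < norm q"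
    | "R < norm p" "R < norm q"
    by linarith
  then show ?thesis
  proof cases
    case 1
    then show ?thesis by (simp add: radial_retraction_eq_self)
  next
    case 2
    then show ?thesis by (rule radial_retraction_lipschitz_outside_inside[OF assms])
  next
    case 3
    then show ?thesis
      using radial_retraction_lipschitz_outside_inside[OF assms 3(2,1)] by (simp add: norm_minus_commute)
  next
    case 4
    then show ?thesis by (rule radial_retraction_lipschitz_outside[OF assms])
  qed
qed

lemma inner_ode_field_radial_retraction: "0 < R \<Longrightarrow> inner p (ode_field (radial_retraction R p)) = 0"
  using inner_ode_field[of "(R / norm p) *\<^sub>R p"] inner_ode_field[of p]
  by (auto simp: radial_retraction_def)

lemma ode_field_radial_retraction_lipschitz:
  assumes "0 < R"
  shows "norm (ode_field (radial_retraction R p) - ode_field (radial_retraction R q))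
    \<le> 72 * R\<^sup>2 * norm (p - q)"
proof -
  have "norm (ode_field (radial_retraction R p) - ode_field (radial_retraction R q))
      \<le> 36 * R\<^sup>2 * norm (radial_retraction R p - radial_retraction R q)"
    using assms by (intro ode_field_lipschitz norm_radial_retraction_le)
  also have "\<dots> \<le> 36 * R\<^sup>2 * (2 * norm (p - q))"
    by (intro mult_left_mono radial_retraction_lipschitz[OF assms]) auto
  finally show ?thesis by simp
qed

lemma has_vector_derivative_Un:
  "(f has_vector_derivative f') (at x within S) \<Longrightarrow> (f has_vector_derivative f') (at x within T) \<Longrightarrow>
   (f has_vector_derivative f') (at x within S \<union> T)"
  unfolding has_vector_derivative_def has_derivative_within by (auto simp: Lim_within_Un)

lemma has_vector_derivative_at_if_within_atLeastAtMost:
  assumes "0 < s" "\<And>T. s \<le> T \<Longrightarrow> (f has_vector_derivative f') (at s within {0..T})"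
  shows "(f has_vector_derivative f') (at s)"
proof -
  have "s \<in> interior {0..s + 1}" using assms(1) by (simp add: interior_atLeastAtMost_real)
  then show ?thesis using assms(2)[of "s + 1"] at_within_interior by fastforce
qed

lemma has_vector_derivative_glue_backward:
  assumes fp0: "fp 0 = u0" and fp: "\<And>T t. 0 \<le> t \<Longrightarrow> t \<le> T \<Longrightarrow> (fp has_vector_derivative F (fp t)) (at t within {0..T})"
    and fm0: "fm 0 = u0" and fm: "\<And>T t. 0 \<le> t \<Longrightarrow> t \<le> T \<Longrightarrow> (fm has_vector_derivative - F (fm t)) (at t within {0..T})"
  defines "u \<equiv> \<lambda>t. if 0 \<le> t then fp t else fm (- t)"
  shows "(u has_vector_derivative F (u t)) (at t)"
proof -
  consider "0 < t" | "t < 0" | "t = 0" by linarith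
  then show ?thesis
  proof cases
    case 1
    have "(fp has_vector_derivative F (fp t)) (at t)"
      using 1 fp by (intro has_vector_derivative_at_if_within_atLeastAtMost) auto
    then have "(u has_vector_derivative F (fp t)) (at t)"
      by (rule has_vector_derivative_transform_within_open[of _ _ _ "{0<..}"]) (use 1 in \<open>auto simp: u_def\<close>)
    then show ?thesis using 1 by (simp add: u_def)
  next
    case 2
    have "(fm has_vector_derivative - F (fm (- t))) (at (- t))"
      using 2 fm by (intro has_vector_derivative_at_if_within_atLeastAtMost) auto
    then have "((fm \<circ> uminus) has_vector_derivative ((-1) *\<^sub>R (- F (fm (- t))))) (at t)"
      by (intro vector_diff_chain_at) (auto intro!: derivative_eq_intros)
    then have "((\<lambda>s. fm (- s)) has_vector_derivative F (u t)) (at t)"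
      using 2 by (simp add: u_def o_def)
    then show ?thesis
      by (rule has_vector_derivative_transform_within_open[of _ _ _ "{..<0}"]) (use 2 in \<open>auto simp: u_def\<close>)
  next
    case 3
    have "(u has_vector_derivative F u0) (at 0 within {0..1})"
      by (rule has_vector_derivative_transform[of 0 "{0..1}" u fp]) (use fp fp0 in \<open>auto simp: u_def\<close>)
    moreover have "((fm \<circ> uminus) has_vector_derivative ((-1) *\<^sub>R (- F (fm 0)))) (at 0 within {-1..0})"
    proof (rule vector_diff_chain_within)
      have "uminus ` {-1..0::real} = {0..1}" by auto
      then show "(fm has_vector_derivative - F (fm 0)) (at (- 0) within uminus ` {-1..0})"
        using fm[of 0 1] by simp
    qed (auto intro!: derivative_eq_intros)
    then have "((\<lambda>s. fm (- s)) has_vector_derivative F u0) (at 0 within {-1..0})"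
      using fm0 by (simp add: o_def)
    then have "(u has_vector_derivative F u0) (at 0 within {-1..0})"
      by (rule has_vector_derivative_transform[rotated 2]) (use fm0 fp0 in \<open>auto simp: u_def\<close>)
    ultimately have "(u has_vector_derivative F u0) (at 0 within {-1..1})"
      using has_vector_derivative_Un ivl_disj_un_two_touch(4)[of "-1" 0 "1::real"] by fastforce
    then have "(u has_vector_derivative F u0) (at 0)"
      using at_within_interior[of 0 "{-1..1::real}"] by simp
    then show ?thesis using 3 fp0 by (simp add: u_def)
  qed
qed

lemma norm_forward_solution_eq:
  fixes F :: "'a::real_inner \<Rightarrow> 'a"
  assumes "\<And>p. inner p (F p) = 0"
    and "\<And>T t. 0 \<le> t \<Longrightarrow> t \<le> T \<Longrightarrow> (f has_vector_derivative F (f t)) (at t within {0..T})"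
    and "0 \<le> t"
  shows "norm (f t) = norm (f 0)"
  using assms by (intro norm_eq_if_inner_field_eq_0[of "{0..t}" F]) auto

theorem ode_field_global_solution:
  obtains U where "U 0 = u0" "\<And>t. (U has_vector_derivative ode_field (U t)) (at t)"
proof -
  define R where "R = norm u0 + 1"
  have R: "0 < R" unfolding R_def by (simp add: add_nonneg_pos)
  define F where "F p = ode_field (radial_retraction R p)" for p
  have L: "0 < 72 * R\<^sup>2" using R by simp
  have lipF: "norm (F p - F q) \<le> 72 * R\<^sup>2 * norm (p - q)"
   and lipF': "norm (- F p - - F q) \<le> 72 * R\<^sup>2 * norm (p - q)" for p q
    using ode_field_radial_retraction_lipschitz[OF R, of p q] unfolding F_def
    by (simp_all add: norm_minus_commute)
  have F: "inner p (F p) = 0" "inner p (- F p) = 0" for p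
    unfolding F_def using inner_ode_field_radial_retraction[OF R] by simp_all
  obtain fp where fp0: "fp 0 = u0"
    and fp: "\<And>T t. 0 \<le> t \<Longrightarrow> t \<le> T \<Longrightarrow> (fp has_vector_derivative F (fp t)) (at t within {0..T})"
    using ode_forward_solution_if_lipschitz[OF L lipF] by blast
  obtain fm where fm0: "fm 0 = u0"
    and fm: "\<And>T t. 0 \<le> t \<Longrightarrow> t \<le> T \<Longrightarrow> (fm has_vector_derivative - F (fm t)) (at t within {0..T})"
    using ode_forward_solution_if_lipschitz[OF L lipF'] by blast
  have F_eq: "F (fp t) = ode_field (fp t)" "F (fm t) = ode_field (fm t)" if "0 \<le> t" for t
    using norm_forward_solution_eq[OF F(1) fp that] norm_forward_solution_eq[OF F(2) fm that] fp0 fm0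
    by (simp_all add: F_def R_def radial_retraction_eq_self)
  have fp': "(fp has_vector_derivative ode_field (fp t)) (at t within {0..T})"
   and fm': "(fm has_vector_derivative - ode_field (fm t)) (at t within {0..T})" if "0 \<le> t" "t \<le> T" for T t
    using fp[OF that] fm[OF that] F_eq[OF that(1)] by simp_all
  show ?thesis
    using has_vector_derivative_glue_backward[OF fp0 fp' fm0 fm']
    by (intro that[of "\<lambda>t. if 0 \<le> t then fp t else fm (- t)"]) (simp_all add: fp0)
qed

section \<open>The form \<open>\<phi>\<^sub>0\<close> on the orbits\<close>

lemma coord_simps:
  "coord (x1, z1, z2, z3) 1 = x1" "coord (x1, z1, z2, z3) 2 = Re z1" "coord (x1, z1, z2, z3) 3 = Im z1"
  "coord (x1, z1, z2, z3) 4 = Re z2" "coord (x1, z1, z2, z3) 5 = Im z2"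
  "coord (x1, z1, z2, z3) 6 = Re z3" "coord (x1, z1, z2, z3) 7 = Im z3"
  by (simp_all add: coord_def)

lemma coord_add: "coord (u + v) i = coord u i + coord v i"
  by (cases u; cases v) (simp add: coord_def)

lemma coord_scaleR: "coord (s *\<^sub>R u) i = s * coord u i"
  by (cases u) (simp add: coord_def)

lemma phi0_add:
  "phi0 (u + v) b c = phi0 u b c + phi0 v b c"
  "phi0 a (u + v) c = phi0 a u c + phi0 a v c"
  "phi0 a b (u + v) = phi0 a b u + phi0 a b v"
  unfolding phi0_def dx3_def coord_add by (simp_all add: algebra_simps)

lemma phi0_scaleR:
  "phi0 (s *\<^sub>R u) b c = s * phi0 u b c"
  "phi0 a (s *\<^sub>R u) c = s * phi0 a u c"
  "phi0 a b (s *\<^sub>R u) = s * phi0 a b u"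
  unfolding phi0_def dx3_def coord_scaleR by (simp_all add: algebra_simps)

lemma phi0_alternating: "phi0 u u w = 0" "phi0 u w u = 0" "phi0 w u u = 0"
  unfolding phi0_def dx3_def by (simp_all add: algebra_simps)

lemma phi0_swap: "phi0 b a c = - phi0 a b c" "phi0 a c b = - phi0 a b c"
  unfolding phi0_def dx3_def by (simp_all add: algebra_simps)

lemma phi0_eq_0_permute:
  assumes "phi0 a b c = 0"
  shows "phi0 b a c = 0" "phi0 a c b = 0" "phi0 b c a = 0" "phi0 c a b = 0" "phi0 c b a = 0"
  using assms phi0_swap(1)[of a b c] phi0_swap(2)[of a b c] phi0_swap(1)[of a c b]
    phi0_swap(2)[of b a c] phi0_swap(1)[of b c a]
  by simp_all

lemma phi0_lincomb_eq_0:
  assumes "phi0 u v w = 0" "phi0 u v y = 0" "phi0 u w y = 0" "phi0 v w y = 0"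
  shows "phi0 (a1 *\<^sub>R u + a2 *\<^sub>R v + a3 *\<^sub>R w + a4 *\<^sub>R y)
              (b1 *\<^sub>R u + b2 *\<^sub>R v + b3 *\<^sub>R w + b4 *\<^sub>R y)
              (c1 *\<^sub>R u + c2 *\<^sub>R v + c3 *\<^sub>R w + c4 *\<^sub>R y) = 0"
  using assms phi0_eq_0_permute[OF assms(1)] phi0_eq_0_permute[OF assms(2)]
    phi0_eq_0_permute[OF assms(3)] phi0_eq_0_permute[OF assms(4)]
  by (simp add: phi0_add phi0_scaleR phi0_alternating)

definition kahler_form :: "R7 \<Rightarrow> R7 \<Rightarrow> real" where
  "kahler_form b c = Im (cnj (fst (snd b)) * fst (snd c)) + Im (cnj (fst (snd (snd b))) * fst (snd (snd c)))
     + Im (cnj (snd (snd (snd b))) * snd (snd (snd c)))"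

definition holomorphic_volume :: "R7 \<Rightarrow> R7 \<Rightarrow> R7 \<Rightarrow> complex" where
  "holomorphic_volume a b c =
       fst (snd a) * (fst (snd (snd b)) * snd (snd (snd c)) - snd (snd (snd b)) * fst (snd (snd c)))
     - fst (snd (snd a)) * (fst (snd b) * snd (snd (snd c)) - snd (snd (snd b)) * fst (snd c))
     + snd (snd (snd a)) * (fst (snd b) * fst (snd (snd c)) - fst (snd (snd b)) * fst (snd c))"

lemma phi0_eq_kahler_form_holomorphic_volume:
  "phi0 a b c = fst a * kahler_form b c - fst b * kahler_form a c + fst c * kahler_form a b
     + Re (holomorphic_volume a b c)"
proof -
  obtain a0 a1 a2 a3 where a: "a = (a0, a1, a2, a3)" by (cases a) auto
  obtain b0 b1 b2 b3 where b: "b = (b0, b1, b2, b3)" by (cases b) auto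
  obtain c0 c1 c2 c3 where c: "c = (c0, c1, c2, c3)" by (cases c) auto
  show ?thesis
    unfolding a b c phi0_def dx3_def coord_simps kahler_form_def holomorphic_volume_def
    by (simp add: algebra_simps)
qed

definition torus_rotation :: "real \<Rightarrow> real \<Rightarrow> R7 \<Rightarrow> R7" where
  "torus_rotation f1 f2 p =
     (fst p, cis f1 * fst (snd p), cis f2 * fst (snd (snd p)), cis (- (f1 + f2)) * snd (snd (snd p)))"

lemma kahler_form_torus_rotation:
  "kahler_form (torus_rotation f1 f2 b) (torus_rotation f1 f2 c) = kahler_form b c"
proof -
  have "cnj (u * y) * (u * w) = (cnj u * u) * (cnj y * w)" for u y w :: complex
    by (simp add: algebra_simps)
  moreover have "cnj (cis f) * cis f = 1" for f by (simp add: cis_cnj cis_mult)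
  ultimately show ?thesis by (simp only: kahler_form_def torus_rotation_def fst_conv snd_conv mult_1_left)
qed

lemma holomorphic_volume_torus_rotation:
  "holomorphic_volume (torus_rotation f1 f2 a) (torus_rotation f1 f2 b) (torus_rotation f1 f2 c)
     = holomorphic_volume a b c"
proof -
  have "holomorphic_volume (torus_rotation f1 f2 a) (torus_rotation f1 f2 b) (torus_rotation f1 f2 c)
      = (cis f1 * cis f2 * cis (- (f1 + f2))) * holomorphic_volume a b c"
    unfolding holomorphic_volume_def torus_rotation_def by (simp add: algebra_simps)
  moreover have "cis f1 * cis f2 * cis (- (f1 + f2)) = 1" by (simp add: cis_mult)
  ultimately show ?thesis by simp
qed

lemma phi0_torus_rotation:
  "phi0 (torus_rotation f1 f2 a) (torus_rotation f1 f2 b) (torus_rotation f1 f2 c) = phi0 a b c"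
  unfolding phi0_eq_kahler_form_holomorphic_volume kahler_form_torus_rotation
    holomorphic_volume_torus_rotation
  by (simp add: torus_rotation_def)

definition rotation_generator1 :: "R7 \<Rightarrow> R7" where
  "rotation_generator1 p = (case p of (x, z1, z2, z3) \<Rightarrow> (0, \<i> * z1, 0, - \<i> * z3))"

definition rotation_generator2 :: "R7 \<Rightarrow> R7" where
  "rotation_generator2 p = (case p of (x, z1, z2, z3) \<Rightarrow> (0, 0, \<i> * z2, - \<i> * z3))"

lemma phi0_rotation_generators:
  "phi0 p (rotation_generator1 p) (rotation_generator2 p)
     = - 3 * Re (fst (snd p) * fst (snd (snd p)) * snd (snd (snd p)))"
proof -
  obtain x z1 z2 z3 where p: "p = (x, z1, z2, z3)" by (cases p) auto
  show ?thesis
    unfolding p phi0_def dx3_def rotation_generator1_def rotation_generator2_def prod.case coord_simps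
    by (simp add: algebra_simps)
qed

lemma phi0_ode_field_eq_0:
  "phi0 p (rotation_generator1 p) (ode_field p) = 0"
  "phi0 p (rotation_generator2 p) (ode_field p) = 0"
  "phi0 (rotation_generator1 p) (rotation_generator2 p) (ode_field p) = 0"
proof -
  obtain x z1 z2 z3 where p: "p = (x, z1, z2, z3)" by (cases p) auto
  show "phi0 p (rotation_generator1 p) (ode_field p) = 0"
    "phi0 p (rotation_generator2 p) (ode_field p) = 0"
    "phi0 (rotation_generator1 p) (rotation_generator2 p) (ode_field p) = 0"
    unfolding p phi0_def dx3_def ode_field_def rotation_generator1_def rotation_generator2_def
      prod.case coord_simps cmod_power2
    by (simp_all add: algebra_simps power2_eq_square)
qed

text \<open>The equations below arise from a vanishing combination \<open>a p + b e\<^sub>1 + c e\<^sub>2 + d F(p)\<close> of the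
  position vector, the rotation generators and the field: the \<open>x\<close>-component, and the real and
  imaginary parts of the \<open>z\<^sub>i\<close>-components multiplied by \<open>cnj z\<^sub>i\<close>, where \<open>A, B, C = |z\<^sub>i|\<^sup>2\<close>
  and \<open>s = Im (z1 z2 z3)\<close>.\<close>

lemma frame_coefficients_eq_0:
  fixes a b c d x s A B C :: real
  assumes nonneg: "0 \<le> A" "0 \<le> B" "0 \<le> C"
    and two_pos: "(0 < A \<and> 0 < B) \<or> (0 < A \<and> 0 < C) \<or> (0 < B \<and> 0 < C)"
    and s: "0 < A \<Longrightarrow> 0 < B \<Longrightarrow> 0 < C \<Longrightarrow> s \<noteq> 0"
    and e0: "a * x - 3 * d * s = 0"
    and e1: "a * A + d * (A * (B - C) + x * s) = 0"
    and e2: "a * B + d * (B * (C - A) + x * s) = 0"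
    and e3: "a * C + d * (C * (A - B) + x * s) = 0"
    and "b * A = 0" "c * B = 0" "(b + c) * C = 0"
  shows "a = 0 \<and> b = 0 \<and> c = 0 \<and> d = 0"
proof -
  have "a * (A + B + C + x\<^sup>2) = (a * A + d * (A * (B - C) + x * s)) + (a * B + d * (B * (C - A) + x * s))
      + (a * C + d * (C * (A - B) + x * s)) + x * (a * x - 3 * d * s)"
    by (simp add: algebra_simps power2_eq_square)
  also have "\<dots> = 0" using e0 e1 e2 e3 by simp
  moreover have "0 < A + B + C + x\<^sup>2" using nonneg two_pos by (auto intro: add_pos_nonneg)
  ultimately have a: "a = 0" by simp
  have d: "d = 0"
  proof (rule ccontr)
    assume "d \<noteq> 0"
    then have "s = 0" "A * (B - C) = 0" "B * (C - A) = 0" "C * (A - B) = 0"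
      using e0 e1 e2 e3 a by simp_all
    with two_pos s show False by auto
  qed
  have "b = 0 \<and> c = 0" using two_pos \<open>b * A = 0\<close> \<open>c * B = 0\<close> \<open>(b + c) * C = 0\<close> by auto
  with a d show ?thesis by simp
qed

lemma Re_Im_cnj_mult_ode_field_component:
  fixes z1 z2 z3 :: complex and a b d x :: real
  shows "Re (cnj z1 * (of_real a * z1 + of_real b * (\<i> * z1) + of_real d *
            (z1 * of_real ((cmod z2)\<^sup>2 - (cmod z3)\<^sup>2) + \<i> * of_real x * cnj (z2 * z3))))
         = a * (cmod z1)\<^sup>2 + d * ((cmod z1)\<^sup>2 * ((cmod z2)\<^sup>2 - (cmod z3)\<^sup>2) + x * Im (z1 * z2 * z3))"
    and "Im (cnj z1 * (of_real a * z1 + of_real b * (\<i> * z1) + of_real d *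
            (z1 * of_real ((cmod z2)\<^sup>2 - (cmod z3)\<^sup>2) + \<i> * of_real x * cnj (z2 * z3))))
         = b * (cmod z1)\<^sup>2 + d * x * Re (z1 * z2 * z3)"
  unfolding cmod_power2 by (simp_all add: algebra_simps power2_eq_square)

lemma orbit_frame_independent:
  fixes a b c d :: real
  assumes re: "Re (z1 * z2 * z3) = 0" and two: "two_nonzero z1 z2 z3"
    and eq: "a *\<^sub>R p + b *\<^sub>R rotation_generator1 p + c *\<^sub>R rotation_generator2 p + d *\<^sub>R ode_field p = 0"
    and p: "p = (x, z1, z2, z3)"
  shows "a = 0 \<and> b = 0 \<and> c = 0 \<and> d = 0"
proof (rule frame_coefficients_eq_0)
  define s where "s = Im (z1 * z2 * z3)"
  note defs = p rotation_generator1_def rotation_generator2_def ode_field_def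
  have "a * x + d * (- 3 * s) = 0" using eq unfolding s_def defs by (simp add: prod_eq_iff)
  then show "a * x - 3 * d * s = 0" by simp
  have "of_real a * z1 + of_real b * (\<i> * z1) + of_real d *
      (z1 * of_real ((cmod z2)\<^sup>2 - (cmod z3)\<^sup>2) + \<i> * of_real x * cnj (z2 * z3)) = 0"
    using eq unfolding defs by (simp add: scaleR_conv_of_real prod_eq_iff)
  from Re_Im_cnj_mult_ode_field_component[of z1 a b d z2 z3 x, unfolded this]
  show "a * (cmod z1)\<^sup>2 + d * ((cmod z1)\<^sup>2 * ((cmod z2)\<^sup>2 - (cmod z3)\<^sup>2) + x * s) = 0"
    "b * (cmod z1)\<^sup>2 = 0"
    using re unfolding s_def by simp_all
  have "of_real a * z2 + of_real c * (\<i> * z2) + of_real d *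
      (z2 * of_real ((cmod z3)\<^sup>2 - (cmod z1)\<^sup>2) + \<i> * of_real x * cnj (z3 * z1)) = 0"
    using eq unfolding defs by (simp add: scaleR_conv_of_real prod_eq_iff)
  from Re_Im_cnj_mult_ode_field_component[of z2 a c d z3 z1 x, unfolded this]
  show "a * (cmod z2)\<^sup>2 + d * ((cmod z2)\<^sup>2 * ((cmod z3)\<^sup>2 - (cmod z1)\<^sup>2) + x * s) = 0"
    "c * (cmod z2)\<^sup>2 = 0"
    using re unfolding s_def by (simp_all add: mult.commute mult.left_commute)
  have "of_real a * z3 + of_real (- (b + c)) * (\<i> * z3) + of_real d *
      (z3 * of_real ((cmod z1)\<^sup>2 - (cmod z2)\<^sup>2) + \<i> * of_real x * cnj (z1 * z2)) = 0"
    using eq unfolding defs by (simp add: scaleR_conv_of_real algebra_simps prod_eq_iff)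
  from Re_Im_cnj_mult_ode_field_component[of z3 a "- (b + c)" d z1 z2 x, unfolded this]
  show "a * (cmod z3)\<^sup>2 + d * ((cmod z3)\<^sup>2 * ((cmod z1)\<^sup>2 - (cmod z2)\<^sup>2) + x * s) = 0"
    "(b + c) * (cmod z3)\<^sup>2 = 0"
    using re unfolding s_def by (auto simp: mult.commute mult.left_commute)
  show "s \<noteq> 0" if "0 < (cmod z1)\<^sup>2" "0 < (cmod z2)\<^sup>2" "0 < (cmod z3)\<^sup>2"
  proof
    assume "s = 0"
    with re have "z1 * z2 * z3 = 0" unfolding s_def by (simp add: complex_eq_iff)
    with that show False by simp
  qed
  show "(0 < (cmod z1)\<^sup>2 \<and> 0 < (cmod z2)\<^sup>2) \<or> (0 < (cmod z1)\<^sup>2 \<and> 0 < (cmod z3)\<^sup>2)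
      \<or> (0 < (cmod z2)\<^sup>2 \<and> 0 < (cmod z3)\<^sup>2)"
    using two unfolding two_nonzero_def by auto
qed auto

lemma act_fst_snd:
  "act g p = (fst g * fst p, of_real (fst g) * cis (fst (snd g)) * fst (snd p),
     of_real (fst g) * cis (snd (snd g)) * fst (snd (snd p)),
     of_real (fst g) * cis (- (fst (snd g) + snd (snd g))) * snd (snd (snd p)))"
  by (cases g; cases p) (simp add: act_def)

text \<open>If two of the \<open>a\<^sub>i\<close> vanish, the differential of the orbit map at the identity takes values in
  the span of two vectors: the position vector and one rotation generator.\<close>

lemma two_nonzero_if_orbit_dim3:
  assumes "orbit_dim3 (x0, a1, a2, a3)"
  shows "two_nonzero a1 a2 a3"
proof (rule ccontr)
  assume not_two: "\<not> two_nonzero a1 a2 a3"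
  obtain D where D: "((\<lambda>g. act g (x0, a1, a2, a3)) has_derivative D) (at (1, 0, 0))"
    and dim: "dim (range D) = 3"
    using assms unfolding orbit_dim3_def by blast
  define D0 where "D0 h = (fst h * x0, (of_real (fst h) + \<i> * of_real (fst (snd h))) * a1,
     (of_real (fst h) + \<i> * of_real (snd (snd h))) * a2,
     (of_real (fst h) - \<i> * of_real (fst (snd h) + snd (snd h))) * a3)" for h :: "real \<times> real \<times> real"
  have "((\<lambda>g. act g (x0, a1, a2, a3)) has_derivative D0) (at (1, 0, 0))"
    unfolding act_fst_snd D0_def
    by (auto intro!: derivative_eq_intros ext simp: algebra_simps complex_eq_iff)
  then have "D0 = D" using D by (rule has_derivative_unique)
  obtain v1 v2 c where span: "\<And>h. D0 h = fst h *\<^sub>R v1 + c h *\<^sub>R v2"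
  proof -
    consider "a2 = 0 \<and> a3 = 0" | "a1 = 0 \<and> a3 = 0" | "a1 = 0 \<and> a2 = 0"
      using not_two unfolding two_nonzero_def by blast
    then show ?thesis
    proof cases
      case 1
      show ?thesis
        by (rule that[of "(x0, a1, 0, 0)" "\<lambda>h. fst (snd h)" "(0, \<i> * a1, 0, 0)"])
           (use 1 in \<open>auto simp: D0_def algebra_simps complex_eq_iff\<close>)
    next
      case 2
      show ?thesis
        by (rule that[of "(x0, 0, a2, 0)" "\<lambda>h. snd (snd h)" "(0, 0, \<i> * a2, 0)"])
           (use 2 in \<open>auto simp: D0_def algebra_simps complex_eq_iff\<close>)
    next
      case 3
      show ?thesis
        by (rule that[of "(x0, 0, 0, a3)" "\<lambda>h. fst (snd h) + snd (snd h)" "(0, 0, 0, - \<i> * a3)"])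
           (use 3 in \<open>auto simp: D0_def algebra_simps complex_eq_iff\<close>)
    qed
  qed
  have "D0 h \<in> span {v1, v2}" for h
    unfolding span by (intro span_add span_mul span_base) auto
  then have "range D0 \<subseteq> span {v1, v2}" by auto
  then have "dim (range D0) \<le> card {v1, v2}" by (rule dim_le_card) simp
  also have "\<dots> \<le> 2" by (simp add: card_insert_if)
  finally show False using dim \<open>D0 = D\<close> by simp
qed

definition orbit_map :: "(real \<Rightarrow> R7) \<Rightarrow> real \<times> real \<times> real \<times> real \<Rightarrow> R7" where
  "orbit_map U y = act (fst y, fst (snd y), fst (snd (snd y))) (U (snd (snd (snd y))))"

lemma smooth_on_orbit_map:
  assumes "smooth_on U UNIV"
  shows "smooth_on (orbit_map U) S"
  unfolding smooth_on_def
proof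
  fix k
  have lin: "bounded_linear (\<lambda>y::real \<times> real \<times> real \<times> real. snd (snd (snd y)))"
    "bounded_linear (\<lambda>y::real \<times> real \<times> real \<times> real. fst (snd y))"
    "bounded_linear (\<lambda>y::real \<times> real \<times> real \<times> real. fst (snd (snd y)))"
    by (intro bounded_linear_intros)+
  have "bounded_linear (\<lambda>y::real \<times> real \<times> real \<times> real. (- 1) * (fst (snd y) + fst (snd (snd y))))"
    by (intro bounded_linear_intros)
  then have lin4: "bounded_linear (\<lambda>y::real \<times> real \<times> real \<times> real. - (fst (snd y) + fst (snd (snd y))))"
    by simp
  have U: "Ck_on k (\<lambda>y. U (snd (snd (snd y)))) S"
    using Ck_on_compose_linear[OF lin(1), of S UNIV k U] assms unfolding smooth_on_def by auto
  have cis: "Ck_on k (\<lambda>y. cis (fst (snd y))) S" "Ck_on k (\<lambda>y. cis (fst (snd (snd y)))) S"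
    "Ck_on k (\<lambda>y. cis (- (fst (snd y) + fst (snd (snd y))))) S"
    using Ck_on_compose_linear[OF lin(2), of S UNIV k cis] Ck_on_compose_linear[OF lin(3), of S UNIV k cis]
      Ck_on_compose_linear[OF lin4, of S UNIV k cis] Ck_on_cis
    by auto
  have r: "Ck_on k (\<lambda>y::real \<times> real \<times> real \<times> real. fst y) S"
    by (rule Ck_on_bounded_linear[OF bounded_linear_fst Ck_on_ident])
  note proj = Ck_on_bounded_linear[OF bounded_linear_fst] Ck_on_bounded_linear[OF bounded_linear_snd]
  show "Ck_on k (orbit_map U) S"
    unfolding orbit_map_def act_fst_snd fst_conv snd_conv
    by (intro Ck_on_Pair Ck_on_mult Ck_on_bounded_linear[OF bounded_linear_of_real] r cis
        proj(1)[OF U] proj(1)[OF proj(2)[OF U]] proj(1)[OF proj(2)[OF proj(2)[OF U]]]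
        proj(2)[OF proj(2)[OF proj(2)[OF U]]])
qed

lemma orbit_map_has_derivative:
  assumes "(U has_vector_derivative ode_field (U t)) (at t)"
  shows "(orbit_map U has_derivative (\<lambda>h. torus_rotation f1 f2
            (fst h *\<^sub>R U t + (r * fst (snd h)) *\<^sub>R rotation_generator1 (U t)
             + (r * fst (snd (snd h))) *\<^sub>R rotation_generator2 (U t)
             + (r * snd (snd (snd h))) *\<^sub>R ode_field (U t)))) (at (r, f1, f2, t))"
proof -
  obtain x z1 z2 z3 where Ut: "U t = (x, z1, z2, z3)" by (cases "U t") auto
  have "bounded_linear (\<lambda>y::real \<times> real \<times> real \<times> real. snd (snd (snd y)))"
    by (intro bounded_linear_intros)
  then have "((\<lambda>y. snd (snd (snd y))) has_derivative (\<lambda>y. snd (snd (snd y)))) (at (r, f1, f2, t))"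
    by (rule bounded_linear_imp_has_derivative)
  moreover have "(U has_derivative (\<lambda>h. h *\<^sub>R ode_field (U t))) (at (snd (snd (snd (r, f1, f2, t)))))"
    using assms by (simp add: has_vector_derivative_def)
  ultimately have "((\<lambda>y. U (snd (snd (snd y)))) has_derivative (\<lambda>h. snd (snd (snd h)) *\<^sub>R ode_field (U t)))
      (at (r, f1, f2, t))"
    by (rule has_derivative_compose)
  note dU = this
  show ?thesis
    unfolding orbit_map_def act_fst_snd fst_conv snd_conv
    apply (rule has_derivative_eq_rhs)
     apply (rule derivative_eq_intros dU refl | simp)+
    apply (rule ext)
    apply (simp add: torus_rotation_def Ut rotation_generator1_def rotation_generator2_def ode_field_def
        scaleR_conv_of_real algebra_simps)
    done
qed

lemma torus_rotation_eq_0_iff: "torus_rotation f1 f2 q = 0 \<longleftrightarrow> q = 0"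
  by (auto simp: torus_rotation_def prod_eq_iff zero_prod_def)

lemma orbit_map_tangent_coassociative:
  fixes U :: "real \<Rightarrow> R7" and t r f1 f2 :: real
  assumes dU: "\<And>t. (U has_vector_derivative ode_field (U t)) (at t)"
    and re: "Re (fst (snd (U t)) * fst (snd (snd (U t))) * snd (snd (snd (U t)))) = 0"
    and two: "two_nonzero (fst (snd (U t))) (fst (snd (snd (U t)))) (snd (snd (snd (U t))))"
    and "0 < r"
  obtains D where "(orbit_map U has_derivative D) (at (r, f1, f2, t))" "inj D"
    "\<And>a b c. phi0 (D a) (D b) (D c) = 0"
proof -
  define p where "p = U t"
  define Y where "Y h = fst h *\<^sub>R p + (r * fst (snd h)) *\<^sub>R rotation_generator1 p
    + (r * fst (snd (snd h))) *\<^sub>R rotation_generator2 p + (r * snd (snd (snd h))) *\<^sub>R ode_field p"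
    for h :: "real \<times> real \<times> real \<times> real"
  obtain x z1 z2 z3 where p: "p = (x, z1, z2, z3)" by (cases p) auto
  have re': "Re (z1 * z2 * z3) = 0" and two': "two_nonzero z1 z2 z3"
    using re two unfolding p_def[symmetric] p by simp_all
  have D: "(orbit_map U has_derivative (\<lambda>h. torus_rotation f1 f2 (Y h))) (at (r, f1, f2, t))"
    unfolding Y_def p_def by (rule orbit_map_has_derivative[OF dU])
  have "inj (\<lambda>h. torus_rotation f1 f2 (Y h))"
    unfolding linear_injective_0[OF bounded_linear.linear[OF has_derivative_bounded_linear[OF D]]]
  proof (intro allI impI)
    fix h assume "torus_rotation f1 f2 (Y h) = 0"
    then have "Y h = 0" by (simp add: torus_rotation_eq_0_iff)
    then have "fst h = 0 \<and> r * fst (snd h) = 0 \<and> r * fst (snd (snd h)) = 0 \<and> r * snd (snd (snd h)) = 0"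
      unfolding Y_def by (rule orbit_frame_independent[OF re' two' _ p])
    then show "h = 0" using \<open>0 < r\<close> by (simp add: prod_eq_iff)
  qed
  moreover have "phi0 (torus_rotation f1 f2 (Y a)) (torus_rotation f1 f2 (Y b)) (torus_rotation f1 f2 (Y c)) = 0"
    for a b c
    unfolding phi0_torus_rotation Y_def
    by (rule phi0_lincomb_eq_0)
       (use phi0_rotation_generators[of p] re phi0_ode_field_eq_0[of p] in \<open>simp_all add: p_def\<close>)
  ultimately show ?thesis using D that by blast
qed

lemma image_orbit_map: "orbit_map U ` {y. 0 < fst y} = {act (r, f1, f2) (U t) | r f1 f2 t. r > 0}"
proof (intro set_eqI iffI)
  fix q assume "q \<in> orbit_map U ` {y. 0 < fst y}"
  then obtain y where y: "0 < fst y" "q = orbit_map U y" by blast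
  obtain r f1 f2 t where "y = (r, f1, f2, t)" by (cases y) auto
  with y show "q \<in> {act (r, f1, f2) (U t) | r f1 f2 t. r > 0}" unfolding orbit_map_def by auto
next
  fix q assume "q \<in> {act (r, f1, f2) (U t) | r f1 f2 t. r > 0}"
  then obtain r f1 f2 t where "q = act (r, f1, f2) (U t)" "r > 0" by blast
  then show "q \<in> orbit_map U ` {y. 0 < fst y}"
    unfolding orbit_map_def by (intro image_eqI[of _ _ "(r, f1, f2, t)"]) auto
qed

lemma coassociative_4fold_orbit:
  assumes dU: "\<And>t. (U has_vector_derivative ode_field (U t)) (at t)"
    and re: "\<And>t. Re (fst (snd (U t)) * fst (snd (snd (U t))) * snd (snd (snd (U t)))) = 0"
    and two: "\<And>t. two_nonzero (fst (snd (U t))) (fst (snd (snd (U t)))) (snd (snd (snd (U t))))"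
  shows "coassociative_4fold {act (r, f1, f2) (U t) | r f1 f2 t. r > 0}"
  unfolding coassociative_4fold_def image_orbit_map[symmetric]
proof (rule exI[of _ "{y. 0 < fst y}"], rule exI[of _ "orbit_map U"], intro conjI ballI refl)
  show "open {y :: real \<times> real \<times> real \<times> real. 0 < fst y}"
    by (intro open_Collect_less continuous_intros)
  have "(1, 0, 0, 0) \<in> {y :: real \<times> real \<times> real \<times> real. 0 < fst y}" by simp
  then show "{y :: real \<times> real \<times> real \<times> real. 0 < fst y} \<noteq> {}" by blast
  show "smooth_on (orbit_map U) {y. 0 < fst y}"
    by (rule smooth_on_orbit_map[OF smooth_on_if_ode_field_solution[OF dU]])
  fix y :: "real \<times> real \<times> real \<times> real"
  assume "y \<in> {y. 0 < fst y}"
  moreover obtain r f1 f2 t where y: "y = (r, f1, f2, t)" by (cases y) auto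
  ultimately have "0 < r" by simp
  obtain D where "(orbit_map U has_derivative D) (at y)" "inj D" "\<And>a b c. phi0 (D a) (D b) (D c) = 0"
    using orbit_map_tangent_coassociative[of U t r f1 f2, OF dU re two \<open>0 < r\<close>] unfolding y by blast
  then show "\<exists>D. (orbit_map U has_derivative D) (at y) \<and> inj D \<and> (\<forall>a b c. phi0 (D a) (D b) (D c) = 0)"
    by blast
qed

section \<open>Solutions of the system\<close>

lemma solution_exists:
  "\<exists>x z1 z2 z3. is_solution_on UNIV x z1 z2 z3 \<and> x 0 = x0 \<and> z1 0 = a1 \<and> z2 0 = a2 \<and> z3 0 = a3"
proof -
  obtain U where U0: "U 0 = (x0, a1, a2, a3)" and dU: "\<And>t. (U has_vector_derivative ode_field (U t)) (at t)"
    using ode_field_global_solution[of "(x0, a1, a2, a3)"] by blast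
  have "\<forall>t\<in>UNIV. ((\<lambda>t. (fst (U t), fst (snd (U t)), fst (snd (snd (U t))), snd (snd (snd (U t)))))
      has_vector_derivative ode_field (fst (U t), fst (snd (U t)), fst (snd (snd (U t))), snd (snd (snd (U t)))))
      (at t)"
    using dU by simp
  then have "is_solution_on UNIV (\<lambda>t. fst (U t)) (\<lambda>t. fst (snd (U t))) (\<lambda>t. fst (snd (snd (U t))))
      (\<lambda>t. snd (snd (snd (U t))))"
    by (simp only: is_solution_on_iff)
  then show ?thesis using U0 by force
qed

lemma solution_eq_on_interval:
  assumes "is_interval I" "0 \<in> I" "is_solution_on I x z1 z2 z3" "is_solution_on UNIV y w1 w2 w3"
    and "y 0 = x 0" "w1 0 = z1 0" "w2 0 = z2 0" "w3 0 = z3 0" and "t \<in> I"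
  shows "y t = x t \<and> w1 t = z1 t \<and> w2 t = z2 t \<and> w3 t = z3 t"
proof -
  have "\<And>s. s \<in> I \<Longrightarrow> ((\<lambda>t. (y t, w1 t, w2 t, w3 t)) has_vector_derivative
      ode_field (y s, w1 s, w2 s, w3 s)) (at s)"
    using assms(4) by (simp add: is_solution_on_iff)
  moreover have "\<And>s. s \<in> I \<Longrightarrow> ((\<lambda>t. (x t, z1 t, z2 t, z3 t)) has_vector_derivative
      ode_field (x s, z1 s, z2 s, z3 s)) (at s)"
    using assms(3) by (simp add: is_solution_on_iff)
  moreover have "(y 0, w1 0, w2 0, w3 0) = (x 0, z1 0, z2 0, z3 0)" using assms(5-8) by simp
  ultimately have "(y t, w1 t, w2 t, w3 t) = (x t, z1 t, z2 t, z3 t)"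
    by (rule ode_field_solutions_eq[OF assms(1,2,9)])
  then show ?thesis by simp
qed

lemma solution_extends:
  assumes "is_interval I" "0 \<in> I" "is_solution_on I x z1 z2 z3"
  shows "\<exists>y w1 w2 w3. is_solution_on UNIV y w1 w2 w3 \<and>
    (\<forall>t\<in>I. y t = x t \<and> w1 t = z1 t \<and> w2 t = z2 t \<and> w3 t = z3 t)"
proof -
  obtain y w1 w2 w3 where "is_solution_on UNIV y w1 w2 w3"
    and "y 0 = x 0" "w1 0 = z1 0" "w2 0 = z2 0" "w3 0 = z3 0"
    using solution_exists by blast
  with solution_eq_on_interval[OF assms] show ?thesis by blast
qed

lemma Re_triple_product_derivative_eq_0:
  fixes z1 z2 z3 :: complex
  shows "Re ((z1 * of_real ((cmod z2)\<^sup>2 - (cmod z3)\<^sup>2) + \<i> * of_real x * cnj (z2 * z3)) * z2 * z3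
           + z1 * (z2 * of_real ((cmod z3)\<^sup>2 - (cmod z1)\<^sup>2) + \<i> * of_real x * cnj (z3 * z1)) * z3
           + z1 * z2 * (z3 * of_real ((cmod z1)\<^sup>2 - (cmod z2)\<^sup>2) + \<i> * of_real x * cnj (z1 * z2))) = 0"
  unfolding of_real_cmod_square_diff by (simp add: algebra_simps)

lemma Re_triple_product_solution_eq:
  assumes "is_solution_on UNIV x z1 z2 z3"
  shows "Re (z1 t * z2 t * z3 t) = Re (z1 0 * z2 0 * z3 0)"
proof -
  have "((\<lambda>t. Re (z1 t * z2 t * z3 t)) has_derivative (\<lambda>h. 0)) (at s within UNIV)" for s
  proof -
    define E where "E = (z1 s * of_real ((cmod (z2 s))\<^sup>2 - (cmod (z3 s))\<^sup>2) + \<i> * of_real (x s) * cnj (z2 s * z3 s)) * z2 s * z3 s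
      + z1 s * (z2 s * of_real ((cmod (z3 s))\<^sup>2 - (cmod (z1 s))\<^sup>2) + \<i> * of_real (x s) * cnj (z3 s * z1 s)) * z3 s
      + z1 s * z2 s * (z3 s * of_real ((cmod (z1 s))\<^sup>2 - (cmod (z2 s))\<^sup>2) + \<i> * of_real (x s) * cnj (z1 s * z2 s))"
    have "(z1 has_derivative (\<lambda>h. h *\<^sub>R (z1 s * of_real ((cmod (z2 s))\<^sup>2 - (cmod (z3 s))\<^sup>2)
          + \<i> * of_real (x s) * cnj (z2 s * z3 s)))) (at s)"
      and "(z2 has_derivative (\<lambda>h. h *\<^sub>R (z2 s * of_real ((cmod (z3 s))\<^sup>2 - (cmod (z1 s))\<^sup>2)
          + \<i> * of_real (x s) * cnj (z3 s * z1 s)))) (at s)"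
      and "(z3 has_derivative (\<lambda>h. h *\<^sub>R (z3 s * of_real ((cmod (z1 s))\<^sup>2 - (cmod (z2 s))\<^sup>2)
          + \<i> * of_real (x s) * cnj (z1 s * z2 s)))) (at s)"
      using assms unfolding is_solution_on_def has_vector_derivative_def by auto
    note d = this
    have deriv: "((\<lambda>t. Re (z1 t * z2 t * z3 t)) has_derivative (\<lambda>h. Re (of_real h * E))) (at s)"
      apply (rule has_derivative_eq_rhs)
       apply (rule derivative_eq_intros d refl)+
      apply (simp add: E_def scaleR_conv_of_real algebra_simps)
      done
    have "Re E = 0" unfolding E_def by (rule Re_triple_product_derivative_eq_0)
    with deriv show ?thesis by (intro has_derivative_eq_rhs[OF deriv]) auto
  qed
  from has_derivative_zero_constant[OF convex_UNIV this] show ?thesis by auto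
qed

lemma solution_norm_eq:
  assumes "is_solution_on UNIV x z1 z2 z3"
  shows "(x t)\<^sup>2 + (cmod (z1 t))\<^sup>2 + (cmod (z2 t))\<^sup>2 + (cmod (z3 t))\<^sup>2
    = (x 0)\<^sup>2 + (cmod (z1 0))\<^sup>2 + (cmod (z2 0))\<^sup>2 + (cmod (z3 0))\<^sup>2"
proof -
  have "norm (x t, z1 t, z2 t, z3 t) = norm (x 0, z1 0, z2 0, z3 0)"
    using assms unfolding is_solution_on_iff
    by (intro ode_field_solution_norm_eq[where U = "\<lambda>t. (x t, z1 t, z2 t, z3 t)" and I = UNIV]) auto
  moreover have "(norm (a, b, c, d))\<^sup>2 = a\<^sup>2 + (cmod b)\<^sup>2 + (cmod c)\<^sup>2 + (cmod d)\<^sup>2"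
    for a :: real and b c d :: complex
    by (simp add: norm_Pair)
  ultimately show ?thesis by metis
qed

lemma solution_two_nonzero:
  assumes sol: "is_solution_on UNIV x z1 z2 z3" and two: "two_nonzero (z1 0) (z2 0) (z3 0)"
  shows "two_nonzero (z1 t) (z2 t) (z3 t)"
proof (rule ccontr)
  define U where "U s = (x s, z1 s, z2 s, z3 s)" for s
  assume not_two: "\<not> two_nonzero (z1 t) (z2 t) (z3 t)"
  have dU: "(U has_vector_derivative ode_field (U s)) (at s)" for s
    using sol unfolding U_def by (simp add: is_solution_on_iff)
  have "ode_field (U t) = 0" unfolding U_def using not_two by (rule ode_field_eq_0)
  then have dW: "((\<lambda>_. U t) has_vector_derivative ode_field (U t)) (at s)" for s
    by (simp add: has_vector_derivative_const)
  have "U 0 = U t"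
    using ode_field_solutions_eq[of UNIV t 0 U "\<lambda>_. U t"] dU dW by simp
  with two not_two show False unfolding U_def by simp
qed

lemma coassociative_4fold_solution_orbit:
  assumes sol: "is_solution_on UNIV x z1 z2 z3"
    and "Re (z1 0 * z2 0 * z3 0) = 0" "orbit_dim3 (x 0, z1 0, z2 0, z3 0)"
  shows "coassociative_4fold {act (r, f1, f2) (x t, z1 t, z2 t, z3 t) | r f1 f2 t. r > 0}"
proof (rule coassociative_4fold_orbit)
  show "((\<lambda>t. (x t, z1 t, z2 t, z3 t)) has_vector_derivative ode_field (x t, z1 t, z2 t, z3 t)) (at t)" for t
    using sol by (simp add: is_solution_on_iff)
  show "Re (fst (snd (x t, z1 t, z2 t, z3 t)) * fst (snd (snd (x t, z1 t, z2 t, z3 t)))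
      * snd (snd (snd (x t, z1 t, z2 t, z3 t)))) = 0" for t
    using Re_triple_product_solution_eq[OF sol, of t] assms(2) by simp
  show "two_nonzero (fst (snd (x t, z1 t, z2 t, z3 t))) (fst (snd (snd (x t, z1 t, z2 t, z3 t))))
      (snd (snd (snd (x t, z1 t, z2 t, z3 t))))" for t
    using solution_two_nonzero[OF sol two_nonzero_if_orbit_dim3[OF assms(3)]] by simp
qed

theorem theorem6p4:
  fixes x0 :: real and a1 a2 a3 :: complex
  assumes "Re (a1 * a2 * a3) = 0"
    and "orbit_dim3 (x0, a1, a2, a3)"
  shows "(\<exists>x z1 z2 z3. is_solution_on UNIV x z1 z2 z3 \<and>
           x 0 = x0 \<and> z1 0 = a1 \<and> z2 0 = a2 \<and> z3 0 = a3) \<and>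
         (\<forall>I x z1 z2 z3. open I \<and> is_interval I \<and> 0 \<in> I \<and> is_solution_on I x z1 z2 z3 \<and>
           x 0 = x0 \<and> z1 0 = a1 \<and> z2 0 = a2 \<and> z3 0 = a3 \<longrightarrow>
           (\<exists>y w1 w2 w3. is_solution_on UNIV y w1 w2 w3 \<and>
              (\<forall>t\<in>I. y t = x t \<and> w1 t = z1 t \<and> w2 t = z2 t \<and> w3 t = z3 t))) \<and>
         (\<forall>x z1 z2 z3. is_solution_on UNIV x z1 z2 z3 \<and>
           x 0 = x0 \<and> z1 0 = a1 \<and> z2 0 = a2 \<and> z3 0 = a3 \<longrightarrow>
           (\<forall>t. Re (z1 t * z2 t * z3 t) = 0) \<and>
           (\<exists>c. \<forall>t. (x t)\<^sup>2 + (cmod (z1 t))\<^sup>2 + (cmod (z2 t))\<^sup>2 + (cmod (z3 t))\<^sup>2 = c) \<and>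
           coassociative_4fold
             {act (r, f1, f2) (x t, z1 t, z2 t, z3 t) | r f1 f2 t. r > 0})"
  apply (intro conjI allI impI)
  subgoal by (rule solution_exists)
  subgoal by (rule solution_extends) auto
  subgoal for x z1 z2 z3 t using Re_triple_product_solution_eq[of x z1 z2 z3 t] assms(1) by auto
  subgoal using solution_norm_eq by blast
  subgoal using assms by (elim conjE, intro coassociative_4fold_solution_orbit) simp_all
  done

end
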